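(* For every $n\geq1$, the triple of statistics $(\mathrm{last},\mathrm{zero},\mathrm{rmin})$ has the same joint distribution over $\mathbf{I}_n(\underline{12}0)$ as over $\mathbf{I}_n(110)$.
   Context: An inversion sequence of length $n$ is $e=e_1\ldots e_n$ with $0\le e_i<i$; $\mathbf{I}_n$ is their set. $\mathbf{I}_n(\underline{12}0)$ is the set of $e\in\mathbf{I}_n$ with no indices $2\le i<j\le n$ such that $e_j<e_{i-1}<e_i$. $\mathbf{I}_n(110)$ is the set of $e\in\mathbf{I}_n$ with no indices $i<j<k$ such that $e_i=e_j>e_k$. For $e\in\mathbf{I}_n$: $\mathrm{last}(e)=e_n$; $\mathrm{zero}(e)$ is the number of entries equal to $0$; $\mathrm{rmin}(e)$ is the number of right-to-left minima of $e$, i.e. indices $i$ with $e_i<e_j$ for all $j>i$. *)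

theory Defs
  imports Main
begin

text \<open>Inversion sequences as lists; the paper's entry e_i (1-based) is e ! (i - 1).\<close>

definition inv_seqs :: "nat \<Rightarrow> nat list set" where
  "inv_seqs n = {e. length e = n \<and> (\<forall>i<n. e ! i < Suc i)}"

text \<open>Pattern underlined 120: no 2 \<le> i < j \<le> n with e_j < e_(i-1) < e_i (1-based).\<close>
definition avoids_vinc120 :: "nat list \<Rightarrow> bool" where
  "avoids_vinc120 e = (\<not> (\<exists>i j. 2 \<le> i \<and> i < j \<and> j \<le> length e \<and>
      e ! (j - 1) < e ! (i - 2) \<and> e ! (i - 2) < e ! (i - 1)))"

definition avoids_110 :: "nat list \<Rightarrow> bool" where
  "avoids_110 e = (\<not> (\<exists>i j k. i < j \<and> j < k \<and> k < length e \<and>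
      e ! i = e ! j \<and> e ! j > e ! k))"

definition I_vinc120 :: "nat \<Rightarrow> nat list set" where
  "I_vinc120 n = {e \<in> inv_seqs n. avoids_vinc120 e}"

definition I_110 :: "nat \<Rightarrow> nat list set" where
  "I_110 n = {e \<in> inv_seqs n. avoids_110 e}"

definition last_stat :: "nat list \<Rightarrow> nat" where
  "last_stat e = last e"

definition zero_stat :: "nat list \<Rightarrow> nat" where
  "zero_stat e = card {i. i < length e \<and> e ! i = 0}"

definition rmin_stat :: "nat list \<Rightarrow> nat" where
  "rmin_stat e = card {i. i < length e \<and> (\<forall>j. i < j \<and> j < length e \<longrightarrow> e ! i < e ! j)}"

end

theory Submission
  imports Defs "HOL-Library.Sublist" "HOL-Combinatorics.Stirling"
begin

text \<open>
  Both classes satisfy the same recurrence, which expresses the joint distribution of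
  (last, zero, rmin) on sequences of length \<open>n + 1\<close> through the distribution on sequences
  of length \<open>n\<close>, and they coincide for \<open>n = 1\<close>.

  For \<open>110\<close>: deleting the leading \<open>0\<close> of \<open>f \<in> I\<^sub>n\<^sub>+\<^sub>1(110)\<close> and decreasing every remaining
  positive entry by one gives \<open>e \<in> I\<^sub>n(110)\<close>. Conversely \<open>f\<close> is recovered from \<open>e\<close> by
  deciding for each zero of \<open>e\<close> whether it becomes \<open>0\<close> or \<open>1\<close>, and the only constraint is
  that these decisions, read as bits, avoid the subsequence \<open>1, 1, 0\<close>. Counting the
  admissible bit words by their last bit and their number of zeros gives the recurrence.

  For the vincular pattern \<open>120\<close>: a sequence splits after its last entry \<open>\<le> t\<close> into a
  head and a tail of larger entries, which avoid the pattern independently. Splitting the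
  sequences of length \<open>n + 1\<close> at \<open>t = 1\<close> and those of length \<open>n\<close> at \<open>t = 0\<close> produces the same
  tails, up to a shift by one. Among the heads with \<open>K + 1\<close> zeros, those of the form
  \<open>h @ [0]\<close> with \<open>h\<close> of length \<open>k\<close> are counted by the Stirling number \<open>S(k, K)\<close>, and those
  of the form \<open>h @ [1]\<close> with \<open>h\<close> of length \<open>k + 1\<close> by
  \<open>S(k, K) + (K + 1) (S(k, K + 1) + S(k, K + 2) + \<dots>)\<close>; the Stirling recurrence then
  matches the two sides.
\<close>

text \<open>\<open>inv_segment k xs\<close>: \<open>xs\<close> may occupy positions \<open>k, k + 1, \<dots>\<close> (0-based) of an
  inversion sequence.\<close>

definition inv_segment :: "nat \<Rightarrow> nat list \<Rightarrow> bool" where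
  "inv_segment k xs \<longleftrightarrow> (\<forall>i<length xs. xs ! i \<le> k + i)"

lemma inv_seqs_iff: "e \<in> inv_seqs n \<longleftrightarrow> length e = n \<and> inv_segment 0 e"
  unfolding inv_seqs_def inv_segment_def by (auto simp: less_Suc_eq_le)

lemma inv_segment_Nil [simp]: "inv_segment k []"
  by (simp add: inv_segment_def)

lemma inv_segment_append:
  "inv_segment k (xs @ ys) \<longleftrightarrow> inv_segment k xs \<and> inv_segment (k + length xs) ys"
  unfolding inv_segment_def
proof safe
  fix i assume "\<forall>i<length (xs @ ys). (xs @ ys) ! i \<le> k + i"
  then show "i < length xs \<Longrightarrow> xs ! i \<le> k + i" "i < length ys \<Longrightarrow> ys ! i \<le> k + length xs + i"
    by (auto simp: nth_append dest: spec[of _ i] spec[of _ "length xs + i"])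
next
  fix i assume "\<forall>i<length xs. xs ! i \<le> k + i" "\<forall>i<length ys. ys ! i \<le> k + length xs + i"
    and "i < length (xs @ ys)"
  then show "(xs @ ys) ! i \<le> k + i"
    by (cases "i < length xs") (auto simp: nth_append dest: spec[of _ "i - length xs"])
qed

lemma inv_segment_Cons: "inv_segment k (x # xs) \<longleftrightarrow> x \<le> k \<and> inv_segment (Suc k) xs"
  using inv_segment_append[of k "[x]" xs] by (simp add: inv_segment_def)

lemma inv_segment_map_Suc: "inv_segment (Suc k) (map Suc xs) \<longleftrightarrow> inv_segment k xs"
  by (simp add: inv_segment_def)

lemma finite_inv_segments: "finite {xs. length xs = m \<and> inv_segment k xs}"
proof (rule finite_subset)
  show "{xs. length xs = m \<and> inv_segment k xs} \<subseteq> {xs. set xs \<subseteq> {0..k + m} \<and> length xs = m}"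
    by (force simp: inv_segment_def in_set_conv_nth)
  show "finite {xs. set xs \<subseteq> {0..k + m} \<and> length xs = m}"
    by (rule finite_lists_length_eq) simp
qed

lemma finite_inv_seqs: "finite (inv_seqs n)"
proof -
  have "inv_seqs n = {xs. length xs = n \<and> inv_segment 0 xs}"
    by (auto simp: inv_seqs_iff)
  then show ?thesis
    using finite_inv_segments by simp
qed

lemma inv_segment_0_hd: "inv_segment 0 e \<Longrightarrow> e \<noteq> [] \<Longrightarrow> hd e = 0"
  by (cases e) (auto simp: inv_segment_Cons)

lemma zero_stat_eq_count_list: "zero_stat e = count_list e 0"
  unfolding zero_stat_def count_list_eq_length_filter length_filter_conv_card
  by (metis (no_types, lifting))

lemma rmin_stat_Nil [simp]: "rmin_stat [] = 0"
  by (simp add: rmin_stat_def)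

lemma rmin_stat_Cons:
  "rmin_stat (x # xs) = rmin_stat xs + (if \<forall>y\<in>set xs. x < y then 1 else 0)"
proof -
  define R where "R xs = {i. i < length xs \<and> (\<forall>j. i < j \<and> j < length xs \<longrightarrow> xs ! i < xs ! j)}"
    for xs :: "nat list"
  have R0: "0 \<in> R (x # xs) \<longleftrightarrow> (\<forall>y\<in>set xs. x < y)"
    by (auto simp: R_def all_set_conv_all_nth gr0_conv_Suc)
  have RSuc: "Suc i \<in> R (x # xs) \<longleftrightarrow> i \<in> R xs" for i
    by (auto simp: R_def gr0_conv_Suc Suc_less_eq2)
  have "R (x # xs) = (if \<forall>y\<in>set xs. x < y then {0} else {}) \<union> Suc ` R xs"
  proof (rule set_eqI)
    fix i show "i \<in> R (x # xs) \<longleftrightarrow> i \<in> (if \<forall>y\<in>set xs. x < y then {0} else {}) \<union> Suc ` R xs"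
      using R0 RSuc by (cases i) auto
  qed
  moreover have "0 \<notin> Suc ` R xs" "finite (R xs)"
    by (auto simp: R_def)
  ultimately show ?thesis
    unfolding rmin_stat_def R_def[symmetric] by (simp add: card_image)
qed

lemma rmin_stat_append:
  assumes "xs \<noteq> []" "\<forall>y\<in>set ys. last xs < y"
  shows "rmin_stat (xs @ ys) = rmin_stat xs + rmin_stat ys"
  using assms
proof (induction xs)
  case (Cons x xs)
  have "(\<forall>y\<in>set (xs @ ys). x < y) \<longleftrightarrow> (\<forall>y\<in>set xs. x < y)" if "xs \<noteq> []"
  proof -
    have "\<forall>y\<in>set ys. last xs < y"
      using Cons.prems that by simp
    then show ?thesis
      using last_in_set[OF that] by (auto intro: less_trans)
  qed
  then show ?case
    using Cons by (cases "xs = []") (auto simp: rmin_stat_Cons)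
qed simp

lemma rmin_stat_last_min:
  "xs \<noteq> [] \<Longrightarrow> \<forall>y\<in>set xs. last xs \<le> y \<Longrightarrow> rmin_stat xs = 1"
proof (induction xs)
  case (Cons x xs)
  then show ?case
    by (cases "xs = []") (auto simp: rmin_stat_Cons not_less intro!: bexI[of _ "last xs"])
qed simp

lemma rmin_stat_last_le_1:
  assumes "0 \<in> set xs" "last xs \<le> 1"
  shows "rmin_stat xs = Suc (last xs)"
  using assms
proof (induction xs)
  case (Cons x xs)
  show ?case
  proof (cases "0 \<in> set xs")
    case True
    then have "xs \<noteq> []"
      by auto
    then have "rmin_stat xs = Suc (last xs)"
      using True Cons by simp
    then show ?thesis
      using True Cons.prems by (auto simp: rmin_stat_Cons)
  next
    case False
    then have "x = 0"
      using Cons.prems by auto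
    show ?thesis
    proof (cases "xs = []")
      case False
      have "rmin_stat xs = 1"
        using \<open>0 \<notin> set xs\<close> Cons.prems False
        by (intro rmin_stat_last_min) (auto, metis One_nat_def Suc_leI le_trans neq0_conv)
      then show ?thesis
        using \<open>0 \<notin> set xs\<close> \<open>x = 0\<close> Cons.prems last_in_set[OF False]
        by (auto simp: rmin_stat_Cons)
    qed (simp add: \<open>x = 0\<close> rmin_stat_Cons)
  qed
qed simp

lemma rmin_stat_map_Suc: "rmin_stat (map Suc xs) = rmin_stat xs"
  by (induction xs) (auto simp: rmin_stat_Cons)

definition stats :: "nat list \<Rightarrow> nat \<times> nat \<times> nat" where
  "stats e = (last e, count_list e 0, rmin_stat e)"

lemma card_filter_eq_if_fibres_eq:
  fixes f :: "'a \<Rightarrow> 'b"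
  assumes "finite A" "finite B" "\<And>s. card {x \<in> A. f x = s} = card {x \<in> B. f x = s}"
  shows "card {x \<in> A. P (f x)} = card {x \<in> B. P (f x)}"
proof -
  let ?S = "{s \<in> f ` (A \<union> B). P s}"
  have *: "card {x \<in> C. P (f x)} = (\<Sum>s\<in>?S. card {x \<in> C. f x = s})"
    if "finite C" "C \<subseteq> A \<union> B" for C
  proof -
    have "{x \<in> C. P (f x)} = (\<Union>s\<in>?S. {x \<in> C. f x = s})"
      using that(2) by auto
    also have "card \<dots> = (\<Sum>s\<in>?S. card {x \<in> C. f x = s})"
      using that(1) assms(1,2) by (intro card_UN_disjoint) auto
    finally show ?thesis .
  qed
  show ?thesis
    using *[of A] *[of B] assms by simp
qed

lemma bij_betw_Sigma_card_filter:
  assumes "bij_betw h (SIGMA a:A. B a) C" "finite A" "\<And>a. a \<in> A \<Longrightarrow> finite (B a)"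
  shows "card {c \<in> C. P c} = (\<Sum>a\<in>A. card {b \<in> B a. P (h (a, b))})"
proof -
  have "{c \<in> C. P c} = h ` (SIGMA a:A. {b \<in> B a. P (h (a, b))})"
    using bij_betw_imp_surj_on[OF assms(1)] by force
  moreover have "inj_on h (SIGMA a:A. {b \<in> B a. P (h (a, b))})"
    using bij_betw_imp_inj_on[OF assms(1)] by (rule inj_on_subset) auto
  ultimately show ?thesis
    using assms(2,3) by (simp add: card_image)
qed

lemma card_product_filter:
  assumes "finite A" "finite B"
  shows "card {(a, b) \<in> A \<times> B. P a b} = (\<Sum>b\<in>B. card {a \<in> A. P a b})"
proof -
  have "{(a, b) \<in> A \<times> B. P a b} = (\<lambda>(b, a). (a, b)) ` (SIGMA b:B. {a \<in> A. P a b})"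
    by auto
  moreover have "inj_on (\<lambda>(b, a). (a, b)) (SIGMA b:B. {a \<in> A. P a b})"
    by (auto simp: inj_on_def)
  ultimately have "card {(a, b) \<in> A \<times> B. P a b} = card (SIGMA b:B. {a \<in> A. P a b})"
    by (simp add: card_image)
  also have "\<dots> = (\<Sum>b\<in>B. card {a \<in> A. P a b})"
    using assms by (simp add: card_SigmaI)
  finally show ?thesis .
qed

lemma card_image_snoc [simp]: "card ((\<lambda>xs. xs @ [x]) ` A) = card A"
  by (rule card_image) (simp add: inj_on_def)

lemma card_Sigma_length:
  assumes "finite A" "\<And>j. finite (B j)" "\<And>u. u \<in> A \<Longrightarrow> length u < N"
  shows "card (SIGMA u:A. B (length u)) = (\<Sum>j<N. card {u \<in> A. length u = j} * card (B j))"
proof -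
  have "card (SIGMA u:A. B (length u)) = (\<Sum>u\<in>A. card (B (length u)))"
    using assms(1,2) by simp
  also have "\<dots> = (\<Sum>j<N. \<Sum>u\<in>{u \<in> A. length u = j}. card (B (length u)))"
    using assms(1,3) by (intro sum.group[symmetric]) auto
  also have "\<dots> = (\<Sum>j<N. card {u \<in> A. length u = j} * card (B j))"
  proof (rule sum.cong)
    fix j
    have "(\<Sum>u\<in>{u \<in> A. length u = j}. card (B (length u))) = (\<Sum>u\<in>{u \<in> A. length u = j}. card (B j))"
      by (rule sum.cong) auto
    then show "(\<Sum>u\<in>{u \<in> A. length u = j}. card (B (length u))) = card {u \<in> A. length u = j} * card (B j)"
      by simp
  qed simp
  finally show ?thesis .
qed

lemma append_Cons_eq_count_imp:
  assumes "count_list u a = count_list u' a" "u @ a # v = u' @ a # v'"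
  shows "u = u' \<and> v = v'"
  using assms
proof (induction u arbitrary: u')
  case Nil
  then show ?case
    by (cases u') auto
next
  case (Cons x u)
  then show ?case
    by (cases u') (auto split: if_splits)
qed

lemma split_at_count: "K < count_list xs a \<Longrightarrow> \<exists>u v. xs = u @ a # v \<and> count_list u a = K"
proof (induction xs arbitrary: K)
  case (Cons x xs)
  show ?case
  proof (cases "x = a \<and> K = 0")
    case True
    then have "x # xs = [] @ a # xs \<and> count_list [] a = K"
      by simp
    then show ?thesis
      by blast
  next
    case False
    then have "K - (if x = a then 1 else 0) < count_list xs a"
      using Cons.prems by auto
    then obtain u v where "xs = u @ a # v" "count_list u a = K - (if x = a then 1 else 0)"
      using Cons.IH by blast
    then have "x # xs = (x # u) @ a # v \<and> count_list (x # u) a = K"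
      using False by auto
    then show ?thesis
      by blast
  qed
qed simp

lemma card_split_at_count:
  assumes S: "\<And>xs. xs \<in> S \<longleftrightarrow> (\<exists>u v. xs = u @ a # v \<and> u \<in> A \<and> v \<in> B (length u))"
    and count: "\<And>u. u \<in> A \<Longrightarrow> count_list u a = K"
    and finite: "finite A" "\<And>j. finite (B j)"
    and length: "\<And>u. u \<in> A \<Longrightarrow> length u < N"
  shows "card S = (\<Sum>j<N. card {u \<in> A. length u = j} * card (B j))"
proof -
  have inj: "inj_on (\<lambda>(u, v). u @ a # v) (SIGMA u:A. B (length u))"
  proof (rule inj_onI, clarify)
    fix u v u' v'
    assume "u \<in> A" "u' \<in> A" "u @ a # v = u' @ a # v'"
    then show "u = u' \<and> v = v'"
      using count append_Cons_eq_count_imp by metis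
  qed
  have "(\<lambda>(u, v). u @ a # v) ` (SIGMA u:A. B (length u)) = S"
    using S by auto
  then have "card S = card (SIGMA u:A. B (length u))"
    using card_image[OF inj] by simp
  then show ?thesis
    using card_Sigma_length[OF finite length] by simp
qed

lemma append_eq_append_split_last:
  assumes "xs @ ys = xs' @ ys'" "xs \<noteq> []" "xs' \<noteq> []" "P (last xs)" "P (last xs')"
    and "\<forall>y\<in>set ys. \<not> P y" "\<forall>y\<in>set ys'. \<not> P y"
  shows "xs = xs' \<and> ys = ys'"
proof -
  obtain us where "xs = xs' @ us \<and> us @ ys = ys' \<or> xs @ us = xs' \<and> ys = us @ ys'"
    using assms(1) append_eq_append_conv2 by blast
  then show ?thesis
  proof
    assume us: "xs = xs' @ us \<and> us @ ys = ys'"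
    have "us = []"
      using us assms(2,4,7) last_in_set[of us] by (cases "us = []") auto
    then show ?thesis
      using us by simp
  next
    assume us: "xs @ us = xs' \<and> ys = us @ ys'"
    have "us = []"
      using us assms(3,5,6) last_in_set[of us] by (cases "us = []") auto
    then show ?thesis
      using us by simp
  qed
qed

section \<open>Equidistribution from a common recurrence\<close>

lemma equidistributed_if_same_recurrence:
  fixes X Y :: "nat \<Rightarrow> 'a set" and \<sigma> :: "'a \<Rightarrow> 'b"
  assumes finite: "\<And>n. finite (X n)" "\<And>n. finite (Y n)"
    and initial: "X 1 = Y 1"
    and rec_X: "\<And>n s. 1 \<le> n \<Longrightarrow> card {x \<in> X (Suc n). \<sigma> x = s} = F n s (\<lambda>P. card {x \<in> X n. P (\<sigma> x)})"
    and rec_Y: "\<And>n s. 1 \<le> n \<Longrightarrow> card {y \<in> Y (Suc n). \<sigma> y = s} = F n s (\<lambda>P. card {y \<in> Y n. P (\<sigma> y)})"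
    and "1 \<le> n"
  shows "card {x \<in> X n. \<sigma> x = s} = card {y \<in> Y n. \<sigma> y = s}"
  using \<open>1 \<le> n\<close>
proof (induction n arbitrary: s rule: dec_induct)
  case base
  then show ?case
    using initial by simp
next
  case (step n)
  have "(\<lambda>P. card {x \<in> X n. P (\<sigma> x)}) = (\<lambda>P. card {y \<in> Y n. P (\<sigma> y)})"
    using card_filter_eq_if_fibres_eq[OF finite step.IH] by blast
  then show ?case
    using rec_X rec_Y step.hyps by simp
qed

definition succ_nonzero :: "nat \<Rightarrow> nat" where
  "succ_nonzero a = (if a = 0 then 0 else Suc a)"

text \<open>With \<open>N P\<close> the number of sequences of length \<open>n\<close> whose statistics (last, zero, rmin)
  satisfy \<open>P\<close>, this is the number of sequences of length \<open>n + 1\<close> with statistics \<open>(l, z, r)\<close>.\<close>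

definition stat_recurrence_rhs :: "((nat \<times> nat \<times> nat \<Rightarrow> bool) \<Rightarrow> nat) \<Rightarrow> nat \<Rightarrow> nat \<Rightarrow> nat \<Rightarrow> nat" where
  "stat_recurrence_rhs N l z r =
       N (\<lambda>(a, b, c). succ_nonzero a = l \<and> Suc b = z \<and> c = r)
     + (z - 1) * N (\<lambda>(a, b, c). succ_nonzero a = l \<and> b = z \<and> c = r)
     + N (\<lambda>(a, b, c). Suc a = l \<and> b = z \<and> Suc c = r)
     + z * N (\<lambda>(a, b, c). Suc a = l \<and> z < b \<and> Suc c = r)"

lemma stat_recurrence_rhs_sum:
  "stat_recurrence_rhs (\<lambda>P. \<Sum>i\<in>I. N i P) l z r = (\<Sum>i\<in>I. stat_recurrence_rhs (N i) l z r)"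
  unfolding stat_recurrence_rhs_def by (simp add: sum.distrib sum_distrib_left)

lemma stat_recurrence_rhs_card:
  assumes "finite A"
  shows "stat_recurrence_rhs (\<lambda>P. card {x \<in> A. P (\<sigma> x)}) l z r
    = (\<Sum>x\<in>A. stat_recurrence_rhs (\<lambda>P. if P (\<sigma> x) then 1 else 0) l z r)"
proof -
  have "card {x \<in> A. P (\<sigma> x)} = (\<Sum>x\<in>A. if P (\<sigma> x) then 1 else 0)" for P
    using assms by (simp add: sum.If_cases Int_def)
  then show ?thesis
    by (simp add: stat_recurrence_rhs_sum)
qed

section \<open>The recurrence for \<open>110\<close>\<close>

lemma avoids_110_iff:
  "avoids_110 e \<longleftrightarrow> (\<forall>i j k. i < j \<longrightarrow> j < k \<longrightarrow> k < length e \<longrightarrow> e ! i = e ! j \<longrightarrow> e ! j \<le> e ! k)"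
  unfolding avoids_110_def by (meson not_le)

lemma finite_I_110: "finite (I_110 n)"
  using finite_inv_seqs by (simp add: I_110_def)

lemma I_110_1: "I_110 1 = {[0]}"
  by (auto simp: I_110_def inv_seqs_def avoids_110_def length_Suc_conv)

lemma zero_in_I_110: "e \<in> I_110 n \<Longrightarrow> 1 \<le> n \<Longrightarrow> 0 \<in> set e"
  using inv_segment_0_hd[of e] hd_in_set[of e] by (cases e) (auto simp: I_110_def inv_seqs_iff)

fun occurs_then_smaller :: "nat \<Rightarrow> nat list \<Rightarrow> bool" where
  "occurs_then_smaller x [] = False"
| "occurs_then_smaller x (y # ys) \<longleftrightarrow> occurs_then_smaller x ys \<or> (y = x \<and> (\<exists>z\<in>set ys. z < x))"

lemma occurs_then_smaller_iff:
  "occurs_then_smaller x ys \<longleftrightarrow> (\<exists>j k. j < k \<and> k < length ys \<and> ys ! j = x \<and> ys ! k < x)"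
proof (induction ys)
  case (Cons y ys)
  have "(\<exists>j k. j < k \<and> k < length (y # ys) \<and> (y # ys) ! j = x \<and> (y # ys) ! k < x) \<longleftrightarrow>
      (\<exists>j k. j < k \<and> k < length ys \<and> ys ! j = x \<and> ys ! k < x) \<or> (y = x \<and> (\<exists>z\<in>set ys. z < x))"
    (is "?l \<longleftrightarrow> ?r")
  proof
    assume ?l
    then obtain j k where jk: "j < k" "k < length (y # ys)" "(y # ys) ! j = x" "(y # ys) ! k < x"
      by blast
    then obtain k' where "k = Suc k'"
      using gr0_conv_Suc by blast
    then show ?r
      using jk nth_mem[of k' ys] by (cases j) auto
  next
    assume ?r
    then show ?l
    proof
      assume "y = x \<and> (\<exists>z\<in>set ys. z < x)"
      then obtain k where "k < length ys" "ys ! k < x" "y = x"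
        by (auto simp: in_set_conv_nth)
      then show ?l
        by (intro exI[of _ 0] exI[of _ "Suc k"]) simp
    qed (metis Suc_less_eq length_Cons nth_Cons_Suc)
  qed
  then show ?case
    using Cons.IH by simp
qed simp

lemma avoids_110_Cons: "avoids_110 (x # xs) \<longleftrightarrow> avoids_110 xs \<and> \<not> occurs_then_smaller x xs"
  unfolding avoids_110_iff occurs_then_smaller_iff
proof (intro iffI conjI notI)
  assume l: "\<forall>i j k. i < j \<longrightarrow> j < k \<longrightarrow> k < length (x # xs) \<longrightarrow>
    (x # xs) ! i = (x # xs) ! j \<longrightarrow> (x # xs) ! j \<le> (x # xs) ! k"
  show "\<forall>i j k. i < j \<longrightarrow> j < k \<longrightarrow> k < length xs \<longrightarrow> xs ! i = xs ! j \<longrightarrow> xs ! j \<le> xs ! k"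
    using l[rule_format, of "Suc i" "Suc j" "Suc k" for i j k] by simp
  assume "\<exists>j k. j < k \<and> k < length xs \<and> xs ! j = x \<and> xs ! k < x"
  then obtain j k where "j < k" "k < length xs" "xs ! j = x" "xs ! k < x"
    by blast
  then show False
    using l[rule_format, of 0 "Suc j" "Suc k"] by simp
next
  assume "(\<forall>i j k. i < j \<longrightarrow> j < k \<longrightarrow> k < length xs \<longrightarrow> xs ! i = xs ! j \<longrightarrow> xs ! j \<le> xs ! k) \<and>
    \<not> (\<exists>j k. j < k \<and> k < length xs \<and> xs ! j = x \<and> xs ! k < x)"
  then have tail: "\<And>i j k. i < j \<Longrightarrow> j < k \<Longrightarrow> k < length xs \<Longrightarrow> xs ! i = xs ! j \<Longrightarrow> xs ! j \<le> xs ! k"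
    and head: "\<And>j k. j < k \<Longrightarrow> k < length xs \<Longrightarrow> xs ! j = x \<Longrightarrow> x \<le> xs ! k"
    using not_le by blast+
  show "\<forall>i j k. i < j \<longrightarrow> j < k \<longrightarrow> k < length (x # xs) \<longrightarrow>
    (x # xs) ! i = (x # xs) ! j \<longrightarrow> (x # xs) ! j \<le> (x # xs) ! k"
  proof (intro allI impI)
    fix i j k assume ijk: "i < j" "j < k" "k < length (x # xs)" "(x # xs) ! i = (x # xs) ! j"
    then obtain j' k' where "j = Suc j'" "k = Suc k'"
      by (metis gr0_conv_Suc less_trans_Suc zero_less_Suc gr0I less_nat_zero_code)
    then show "(x # xs) ! j \<le> (x # xs) ! k"
      using ijk head tail[of "i - 1" j' k'] by (cases i) auto
  qed
qed

lemma not_occurs_then_smaller_0 [simp]: "\<not> occurs_then_smaller 0 xs"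
  by (induction xs) auto

lemma avoids_110_Cons_0: "avoids_110 (0 # xs) \<longleftrightarrow> avoids_110 xs"
  by (simp add: avoids_110_Cons)

fun lift_seq :: "nat list \<Rightarrow> bool list \<Rightarrow> nat list" where
  "lift_seq [] bs = []"
| "lift_seq (x # e) bs =
     (if x = 0 then (if hd bs then 1 else 0) # lift_seq e (tl bs) else Suc x # lift_seq e bs)"

lemma lift_seq_Cons_0 [simp]: "lift_seq (0 # e) (b # bs) = (if b then 1 else 0) # lift_seq e bs"
  by simp

lemma lift_seq_Cons_pos [simp]: "x \<noteq> 0 \<Longrightarrow> lift_seq (x # e) bs = Suc x # lift_seq e bs"
  by simp

declare lift_seq.simps(2) [simp del]

lemma lift_seq_induct [consumes 1, case_names Nil Cons_0 Cons_pos]: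
  assumes "length bs = count_list e 0"
    and "P [] []"
    and "\<And>e b bs. length bs = count_list e 0 \<Longrightarrow> P e bs \<Longrightarrow> P (0 # e) (b # bs)"
    and "\<And>x e bs. x \<noteq> 0 \<Longrightarrow> length bs = count_list e 0 \<Longrightarrow> P e bs \<Longrightarrow> P (x # e) bs"
  shows "P e bs"
  using assms(1)
proof (induction e arbitrary: bs)
  case Nil
  then show ?case using assms(2) by simp
next
  case (Cons x e)
  show ?case
  proof (cases "x = 0")
    case True
    then obtain b bs' where "bs = b # bs'"
      using Cons.prems by (cases bs) auto
    then show ?thesis
      using Cons True assms(3) by simp
  next
    case False
    then show ?thesis
      using Cons assms(4) by simp
  qed
qed

lemma length_lift_seq [simp]: "length (lift_seq e bs) = length e"
  by (induction e arbitrary: bs) (auto simp: lift_seq.simps(2))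

lemma lift_seq_eq_Nil_iff [simp]: "lift_seq e bs = [] \<longleftrightarrow> e = []"
  by (metis length_0_conv length_lift_seq)

lemma map_pred_lift_seq: "map (\<lambda>x. x - 1) (lift_seq e bs) = e"
  by (induction e arbitrary: bs) (auto simp: lift_seq.simps(2))

lemma lift_seq_unlift:
  "lift_seq (map (\<lambda>x. x - 1) xs) (map (\<lambda>x. x = 1) (filter (\<lambda>x. x \<le> 1) xs)) = xs"
  by (induction xs) (auto simp: lift_seq.simps(2))

lemma count_zeros_unlift:
  "count_list (map (\<lambda>x. x - 1) xs) 0 = length (filter (\<lambda>x. x \<le> 1) (xs :: nat list))"
  by (induction xs) (auto simp: diff_is_0_eq)

lemma bits_lift_seq:
  assumes "length bs = count_list e 0"
  shows "map (\<lambda>x. x = 1) (filter (\<lambda>x. x \<le> 1) (lift_seq e bs)) = bs"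
  using assms by (induction rule: lift_seq_induct) auto

lemma count_zeros_lift_seq:
  assumes "length bs = count_list e 0"
  shows "count_list (lift_seq e bs) 0 = count_list bs False"
  using assms by (induction rule: lift_seq_induct) auto

lemma zero_in_lift_seq:
  assumes "length bs = count_list e 0"
  shows "0 \<in> set (lift_seq e bs) \<longleftrightarrow> False \<in> set bs"
  using assms by (induction rule: lift_seq_induct) auto

lemma ex_le_1_in_lift_seq:
  assumes "length bs = count_list e 0"
  shows "(\<exists>y\<in>set (lift_seq e bs). y \<le> 1) \<longleftrightarrow> bs \<noteq> []"
  using assms by (induction rule: lift_seq_induct) auto

lemma ex_less_in_lift_seq:
  assumes "length bs = count_list e 0" "0 < x"
  shows "(\<exists>y\<in>set (lift_seq e bs). y < Suc x) \<longleftrightarrow> (\<exists>y\<in>set e. y < x)"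
  using assms by (induction rule: lift_seq_induct) auto

lemma all_greater_in_lift_seq:
  assumes "length bs = count_list e 0" "0 < x"
  shows "(\<forall>y\<in>set (lift_seq e bs). Suc x < y) \<longleftrightarrow> (\<forall>y\<in>set e. x < y)"
  using assms by (induction rule: lift_seq_induct) auto

lemma inv_segment_lift_seq:
  assumes "length bs = count_list e 0"
  shows "inv_segment (Suc k) (lift_seq e bs) \<longleftrightarrow> inv_segment k e"
  using assms by (induction arbitrary: k rule: lift_seq_induct) (auto simp: inv_segment_Cons)

lemma occurs_then_smaller_1_lift_seq:
  assumes "length bs = count_list e 0"
  shows "occurs_then_smaller 1 (lift_seq e bs) \<longleftrightarrow> subseq [True, False] bs"
  using assms
proof (induction rule: lift_seq_induct)
  case (Cons_0 e b bs)
  then show ?case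
    using zero_in_lift_seq[of bs e] by (auto simp: subseq_singleton_left dest: subseq_Cons')
qed auto

lemma occurs_then_smaller_Suc_lift_seq:
  assumes "length bs = count_list e 0" "0 < x"
  shows "occurs_then_smaller (Suc x) (lift_seq e bs) \<longleftrightarrow> occurs_then_smaller x e"
  using assms
proof (induction rule: lift_seq_induct)
  case (Cons_pos y e bs)
  then show ?case
    using ex_less_in_lift_seq[of bs e x] by auto
qed auto

lemma avoids_110_lift_seq:
  assumes "length bs = count_list e 0"
  shows "avoids_110 (lift_seq e bs) \<longleftrightarrow> avoids_110 e \<and> \<not> subseq [True, True, False] bs"
  using assms
proof (induction rule: lift_seq_induct)
  case Nil
  then show ?case
    by (simp add: avoids_110_def)
next
  case (Cons_0 e b bs)
  then show ?case
    using occurs_then_smaller_1_lift_seq[OF Cons_0(1)]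
    by (auto simp: avoids_110_Cons dest: subseq_Cons')
next
  case (Cons_pos x e bs)
  then show ?case
    using occurs_then_smaller_Suc_lift_seq[OF Cons_pos(2), of x] by (auto simp: avoids_110_Cons)
qed

lemma last_lift_seq:
  assumes "length bs = count_list e 0" "e \<noteq> []"
  shows "last (lift_seq e bs) = (if last e = 0 then (if last bs then 1 else 0) else Suc (last e))"
  using assms
proof (induction rule: lift_seq_induct)
  case (Cons_0 e b bs)
  have "bs \<noteq> []" if "e \<noteq> []" "last e = 0"
    using Cons_0(1) that last_in_set[OF that(1)] count_list_0_iff[of e 0] by auto
  then show ?case
    using Cons_0 by (cases "e = []") auto
qed auto

lemma rmin_stat_lift_seq:
  assumes "length bs = count_list e 0"
  shows "rmin_stat (lift_seq e bs) + (if 0 \<in> set e then 1 else 0)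
    = rmin_stat e + (if False \<in> set bs then 1 else 0) + (if bs \<noteq> [] \<and> last bs then 1 else 0)"
  using assms
proof (induction rule: lift_seq_induct)
  case (Cons_0 e b bs)
  have "0 \<in> set e \<longleftrightarrow> bs \<noteq> []"
    using Cons_0(1) count_list_0_iff[of e 0] by auto
  moreover have "(\<forall>y\<in>set (lift_seq e bs). 0 < y) \<longleftrightarrow> False \<notin> set bs"
    using zero_in_lift_seq[OF Cons_0(1)] by (auto intro!: gr0I)
  moreover have "(\<forall>y\<in>set (lift_seq e bs). 1 < y) \<longleftrightarrow> bs = []"
    using ex_le_1_in_lift_seq[OF Cons_0(1)] by (auto simp: not_le)
  moreover have "(\<forall>y\<in>set e. 0 < y) \<longleftrightarrow> 0 \<notin> set e"
    by (auto intro!: gr0I)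
  ultimately show ?case
    using Cons_0(2) by (cases "bs = []"; cases b) (auto simp: rmin_stat_Cons)
next
  case (Cons_pos x e bs)
  then show ?case
    using all_greater_in_lift_seq[OF Cons_pos(2), of x] by (simp add: rmin_stat_Cons)
qed simp

definition admissible_bits :: "nat \<Rightarrow> bool list set" where
  "admissible_bits m = {bs. length bs = m \<and> \<not> subseq [True, True, False] bs}"

lemma finite_admissible_bits: "finite (admissible_bits m)"
proof (rule finite_subset)
  show "admissible_bits m \<subseteq> {bs. set bs \<subseteq> UNIV \<and> length bs = m}"
    by (auto simp: admissible_bits_def)
qed (rule finite_lists_length_eq, simp)

lemma count_list_True_eq: "count_list bs True = length bs - count_list bs False"
  by (induction bs) (auto simp: Suc_diff_le count_le_length)

lemma count_list_pos_iff: "0 < count_list xs x \<longleftrightarrow> x \<in> set xs"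
  by (induction xs) auto

lemma subseq_True_False_snoc:
  "subseq [True, False] (bs @ [b]) \<longleftrightarrow> subseq [True, False] bs \<or> (\<not> b \<and> True \<in> set bs)"
  by (induction bs) (auto simp: subseq_singleton_left)

lemma subseq_True_True_False_snoc:
  "subseq [True, True, False] (bs @ [b]) \<longleftrightarrow> subseq [True, True, False] bs \<or> (\<not> b \<and> 2 \<le> count_list bs True)"
  by (induction bs) (auto simp: subseq_True_False_snoc Suc_le_eq count_list_pos_iff)

lemma admissible_bits_snoc:
  "{bs \<in> admissible_bits (Suc m). last bs = b \<and> P (count_list bs False)}
   = (\<lambda>bs. bs @ [b]) ` {bs \<in> admissible_bits m. (b \<or> count_list bs True \<le> 1) \<and> P (count_list bs False + (if b then 0 else 1))}"
proof (rule set_eqI)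
  fix bs
  show "bs \<in> {bs \<in> admissible_bits (Suc m). last bs = b \<and> P (count_list bs False)} \<longleftrightarrow>
    bs \<in> (\<lambda>bs. bs @ [b]) ` {bs \<in> admissible_bits m. (b \<or> count_list bs True \<le> 1) \<and> P (count_list bs False + (if b then 0 else 1))}"
  proof (cases bs rule: rev_cases)
    case (snoc bs' b')
    then show ?thesis
      by (auto simp: admissible_bits_def subseq_True_True_False_snoc not_le)
  qed (auto simp: admissible_bits_def)
qed

lemma card_admissible_bits_False:
  "card {bs \<in> admissible_bits m. count_list bs False = c}
     = (if c = m then 1 else if Suc c = m then m else if c + 2 \<le> m then Suc c else 0)"
proof (induction m arbitrary: c)
  case 0
  have "{bs \<in> admissible_bits 0. count_list bs False = c} = (if c = 0 then {[]} else {})"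
    by (auto simp: admissible_bits_def)
  then show ?case
    by simp
next
  case (Suc m)
  let ?A = "\<lambda>b. {bs \<in> admissible_bits (Suc m). last bs = b \<and> count_list bs False = c}"
  have "{bs \<in> admissible_bits (Suc m). count_list bs False = c} = ?A True \<union> ?A False"
    by auto
  then have "card {bs \<in> admissible_bits (Suc m). count_list bs False = c} = card (?A True) + card (?A False)"
    by (simp only:) (rule card_Un_disjoint, use finite_admissible_bits in auto)
  also have "card (?A True) = card {bs \<in> admissible_bits m. count_list bs False = c}"
    using admissible_bits_snoc[of m True "\<lambda>x. x = c"] by simp
  also have "card (?A False) = (if 1 \<le> c \<and> m \<le> c then card {bs \<in> admissible_bits m. count_list bs False = c - 1} else 0)"
  proof -
    have "{bs \<in> admissible_bits m. count_list bs True \<le> 1 \<and> count_list bs False + 1 = c}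
        = (if 1 \<le> c \<and> m \<le> c then {bs \<in> admissible_bits m. count_list bs False = c - 1} else {})"
      by (auto simp: admissible_bits_def count_list_True_eq)
    then show ?thesis
      using admissible_bits_snoc[of m False "\<lambda>x. x = c"] by simp
  qed
  finally show ?case
    using Suc.IH by auto
qed

lemma card_admissible_bits_last_True:
  "card {bs \<in> admissible_bits (Suc m). last bs \<and> Suc (count_list bs False) = z}
     = (if z = Suc m then 1 else if 1 \<le> z \<and> z < Suc m then z else 0)"
proof -
  have "card {bs \<in> admissible_bits (Suc m). last bs \<and> Suc (count_list bs False) = z}
      = card {bs \<in> admissible_bits m. Suc (count_list bs False) = z}"
    using admissible_bits_snoc[of m True "\<lambda>x. Suc x = z"] by simp
  also have "\<dots> = (if 1 \<le> z then card {bs \<in> admissible_bits m. count_list bs False = z - 1} else 0)"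
    by (cases z) simp_all
  finally show ?thesis
    by (simp add: card_admissible_bits_False) arith
qed

lemma card_admissible_bits_last_False:
  "card {bs \<in> admissible_bits (Suc m). \<not> last bs \<and> Suc (count_list bs False) = z}
     = (if z = Suc (Suc m) then 1 else if z = Suc m then z - 1 else 0)"
proof -
  have "card {bs \<in> admissible_bits (Suc m). \<not> last bs \<and> Suc (count_list bs False) = z}
      = card {bs \<in> admissible_bits m. count_list bs True \<le> 1 \<and> Suc (count_list bs False + 1) = z}"
    using admissible_bits_snoc[of m False "\<lambda>x. Suc x = z"] by simp
  also have "{bs \<in> admissible_bits m. count_list bs True \<le> 1 \<and> Suc (count_list bs False + 1) = z}
      = (if 2 \<le> z \<and> m \<le> z - 1 then {bs \<in> admissible_bits m. count_list bs False = z - 2} else {})"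
    by (auto simp: admissible_bits_def count_list_True_eq)
  finally show ?thesis
    by (simp add: card_admissible_bits_False) arith
qed

lemma I_110_Suc_bij:
  "bij_betw (\<lambda>(e, bs). 0 # lift_seq e bs)
     (SIGMA e:I_110 n. admissible_bits (count_list e 0)) (I_110 (Suc n))"
proof (rule bij_betw_byWitness[where f' = "\<lambda>f. (map (\<lambda>x. x - 1) (tl f), map (\<lambda>x. x = 1) (filter (\<lambda>x. x \<le> 1) (tl f)))"])
  have head: "f = 0 # tl f" if "f \<in> I_110 (Suc n)" for f
    using that inv_segment_0_hd[of f] by (cases f) (auto simp: I_110_def inv_seqs_iff)
  show "\<forall>p\<in>SIGMA e:I_110 n. admissible_bits (count_list e 0).
      (\<lambda>f. (map (\<lambda>x. x - 1) (tl f), map (\<lambda>x. x = 1) (filter (\<lambda>x. x \<le> 1) (tl f)))) ((\<lambda>(e, bs). 0 # lift_seq e bs) p) = p"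
    using map_pred_lift_seq bits_lift_seq by (auto simp: admissible_bits_def)
  show "\<forall>f\<in>I_110 (Suc n). (\<lambda>(e, bs). 0 # lift_seq e bs)
      ((\<lambda>f. (map (\<lambda>x. x - 1) (tl f), map (\<lambda>x. x = 1) (filter (\<lambda>x. x \<le> 1) (tl f)))) f) = f"
    using head lift_seq_unlift by (metis (no_types, lifting) case_prod_conv)
  show "(\<lambda>(e, bs). 0 # lift_seq e bs) ` (SIGMA e:I_110 n. admissible_bits (count_list e 0)) \<subseteq> I_110 (Suc n)"
    by (auto simp: I_110_def inv_seqs_iff admissible_bits_def inv_segment_Cons
        avoids_110_Cons_0 avoids_110_lift_seq inv_segment_lift_seq)
  show "(\<lambda>f. (map (\<lambda>x. x - 1) (tl f), map (\<lambda>x. x = 1) (filter (\<lambda>x. x \<le> 1) (tl f)))) ` I_110 (Suc n)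
      \<subseteq> (SIGMA e:I_110 n. admissible_bits (count_list e 0))"
  proof clarify
    fix f assume f: "f \<in> I_110 (Suc n)"
    define L where "L = tl f"
    let ?e = "map (\<lambda>x. x - 1) L" and ?bs = "map (\<lambda>x. x = 1) (filter (\<lambda>x. x \<le> 1) L)"
    have len: "length ?bs = count_list ?e 0"
      using count_zeros_unlift[of L] by simp
    have "lift_seq ?e ?bs = L"
      by (rule lift_seq_unlift)
    moreover have "avoids_110 L" "inv_segment 1 L" "length L = n"
      using f head[OF f] unfolding L_def[symmetric]
      by (auto simp: I_110_def inv_seqs_iff avoids_110_Cons_0 inv_segment_Cons dest: sym)
    ultimately show "?e \<in> I_110 n \<and> ?bs \<in> admissible_bits (count_list ?e 0)"
      using len avoids_110_lift_seq[OF len] inv_segment_lift_seq[OF len, of 0]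
      by (simp add: I_110_def inv_seqs_iff admissible_bits_def L_def)
  qed
qed

lemma stats_Cons_0_lift_seq:
  assumes "length bs = count_list e 0" "0 \<in> set e"
  shows "stats (0 # lift_seq e bs) =
    (if last bs then (Suc (last e), Suc (count_list bs False), Suc (rmin_stat e))
     else (succ_nonzero (last e), Suc (count_list bs False), rmin_stat e))"
proof -
  have "e \<noteq> []" "bs \<noteq> []"
    using assms count_list_0_iff[of e 0] by auto
  have "(\<forall>y\<in>set (lift_seq e bs). 0 < y) \<longleftrightarrow> False \<notin> set bs"
    using zero_in_lift_seq[OF assms(1)] by (auto intro!: gr0I)
  then have "rmin_stat (0 # lift_seq e bs) = rmin_stat e + (if last bs then 1 else 0)"
    using rmin_stat_lift_seq[OF assms(1)] assms(2) \<open>bs \<noteq> []\<close> by (auto simp: rmin_stat_Cons)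
  then show ?thesis
    using last_lift_seq[OF assms(1) \<open>e \<noteq> []\<close>] count_zeros_lift_seq[OF assms(1)] \<open>e \<noteq> []\<close>
    by (simp add: stats_def succ_nonzero_def)
qed

lemma card_lift_seq_fibre:
  assumes "0 \<in> set e"
  shows "card {bs \<in> admissible_bits (count_list e 0). stats (0 # lift_seq e bs) = (l, z, r)}
    = stat_recurrence_rhs (\<lambda>P. if P (stats e) then 1 else 0) l z r"
proof -
  obtain m where m: "count_list e 0 = Suc m"
    using assms count_list_0_iff[of e 0] not0_implies_Suc by blast
  let ?T = "{bs \<in> admissible_bits (Suc m). last bs \<and> Suc (count_list bs False) = z}"
  let ?F = "{bs \<in> admissible_bits (Suc m). \<not> last bs \<and> Suc (count_list bs False) = z}"
  have "{bs \<in> admissible_bits (count_list e 0). stats (0 # lift_seq e bs) = (l, z, r)}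
      = (if Suc (last e) = l \<and> Suc (rmin_stat e) = r then ?T else {})
      \<union> (if succ_nonzero (last e) = l \<and> rmin_stat e = r then ?F else {})"
    using stats_Cons_0_lift_seq[OF _ assms] m by (auto simp: admissible_bits_def split: if_splits)
  moreover have "finite ?T" "finite ?F"
    using finite_admissible_bits by auto
  ultimately have "card {bs \<in> admissible_bits (count_list e 0). stats (0 # lift_seq e bs) = (l, z, r)}
      = (if Suc (last e) = l \<and> Suc (rmin_stat e) = r then card ?T else 0)
      + (if succ_nonzero (last e) = l \<and> rmin_stat e = r then card ?F else 0)"
    by (simp add: card_Un_disjoint)
  then show ?thesis
    unfolding card_admissible_bits_last_True card_admissible_bits_last_False
    by (auto simp: stat_recurrence_rhs_def stats_def m)
qed

theorem I_110_stat_recurrence: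
  assumes "1 \<le> n"
  shows "card {f \<in> I_110 (Suc n). stats f = (l, z, r)}
    = stat_recurrence_rhs (\<lambda>P. card {e \<in> I_110 n. P (stats e)}) l z r"
proof -
  have "card {f \<in> I_110 (Suc n). stats f = (l, z, r)}
      = (\<Sum>e\<in>I_110 n. card {bs \<in> admissible_bits (count_list e 0). stats (0 # lift_seq e bs) = (l, z, r)})"
    using bij_betw_Sigma_card_filter[OF I_110_Suc_bij] finite_I_110 finite_admissible_bits by simp
  also have "\<dots> = (\<Sum>e\<in>I_110 n. stat_recurrence_rhs (\<lambda>P. if P (stats e) then 1 else 0) l z r)"
    using zero_in_I_110 assms by (intro sum.cong refl card_lift_seq_fibre) blast
  finally show ?thesis
    by (simp add: stat_recurrence_rhs_card finite_I_110)
qed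

section \<open>Ascents and the vincular pattern \<open>120\<close>\<close>

lemma avoids_vinc120_iff:
  "avoids_vinc120 e \<longleftrightarrow> (\<forall>a q. Suc a < q \<longrightarrow> q < length e \<longrightarrow> e ! a < e ! Suc a \<longrightarrow> e ! a \<le> e ! q)"
  unfolding avoids_vinc120_def
proof safe
  fix a q assume *: "\<not> (\<exists>i j. 2 \<le> i \<and> i < j \<and> j \<le> length e \<and> e ! (j - 1) < e ! (i - 2) \<and> e ! (i - 2) < e ! (i - 1))"
    and aq: "Suc a < q" "q < length e" "e ! a < e ! Suc a"
  have "\<not> (2 \<le> Suc (Suc a) \<and> Suc (Suc a) < Suc q \<and> Suc q \<le> length e \<and>
      e ! (Suc q - 1) < e ! (Suc (Suc a) - 2) \<and> e ! (Suc (Suc a) - 2) < e ! (Suc (Suc a) - 1))"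
    using * by blast
  then show "e ! a \<le> e ! q"
    using aq by simp
next
  fix i j assume *: "\<forall>a q. Suc a < q \<longrightarrow> q < length e \<longrightarrow> e ! a < e ! Suc a \<longrightarrow> e ! a \<le> e ! q"
    and ij: "2 \<le> i" "i < j" "j \<le> length e" "e ! (j - 1) < e ! (i - 2)" "e ! (i - 2) < e ! (i - 1)"
  have "Suc (i - 2) = i - 1" "i - 1 < j - 1" "j - 1 < length e" using ij by auto
  then show False using *[rule_format, of "i - 2" "j - 1"] ij by simp
qed

lemma finite_I_vinc120: "finite (I_vinc120 n)"
  using finite_inv_seqs by (simp add: I_vinc120_def)

lemma I_vinc120_1: "I_vinc120 1 = {[0]}"
  by (auto simp: I_vinc120_def inv_seqs_def avoids_vinc120_def length_Suc_conv)

lemma hd_I_vinc120: "f \<in> I_vinc120 m \<Longrightarrow> 1 \<le> m \<Longrightarrow> f \<noteq> [] \<and> hd f = 0"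
  using inv_segment_0_hd[of f] by (cases f) (auto simp: I_vinc120_def inv_seqs_iff)

lemma avoids_vinc120_Nil [simp]: "avoids_vinc120 []"
  and avoids_vinc120_single [simp]: "avoids_vinc120 [x]"
  by (simp_all add: avoids_vinc120_iff)

lemma avoids_vinc120_Cons_Cons:
  "avoids_vinc120 (x # y # xs) \<longleftrightarrow> (x < y \<longrightarrow> (\<forall>z\<in>set xs. x \<le> z)) \<and> avoids_vinc120 (y # xs)"
  unfolding avoids_vinc120_iff
proof (intro iffI conjI allI impI)
  let ?e = "x # y # xs"
  assume l: "\<forall>a q. Suc a < q \<longrightarrow> q < length ?e \<longrightarrow> ?e ! a < ?e ! Suc a \<longrightarrow> ?e ! a \<le> ?e ! q"
  show "\<forall>z\<in>set xs. x \<le> z" if "x < y"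
  proof
    fix z assume "z \<in> set xs"
    then obtain i where "i < length xs" "z = xs ! i"
      by (auto simp: in_set_conv_nth)
    then show "x \<le> z"
      using that l[rule_format, of 0 "Suc (Suc i)"] by simp
  qed
  fix a q assume "Suc a < q" "q < length (y # xs)" "(y # xs) ! a < (y # xs) ! Suc a"
  then show "(y # xs) ! a \<le> (y # xs) ! q"
    using l[rule_format, of "Suc a" "Suc q"] by simp
next
  fix a q
  assume r: "(x < y \<longrightarrow> (\<forall>z\<in>set xs. x \<le> z)) \<and>
    (\<forall>a q. Suc a < q \<longrightarrow> q < length (y # xs) \<longrightarrow> (y # xs) ! a < (y # xs) ! Suc a \<longrightarrow> (y # xs) ! a \<le> (y # xs) ! q)"
    and aq: "Suc a < q" "q < length (x # y # xs)" "(x # y # xs) ! a < (x # y # xs) ! Suc a"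
  note head = conjunct1[OF r] and tail = conjunct2[OF r]
  define q' where "q' = q - 2"
  have q': "q = Suc (Suc q')"
    using aq(1) by (simp add: q'_def)
  show "(x # y # xs) ! a \<le> (x # y # xs) ! q"
  proof (cases a)
    case 0
    then show ?thesis
      using head aq q' by simp
  next
    case (Suc a')
    then show ?thesis
      using tail[rule_format, of a' "Suc q'"] aq q' by simp
  qed
qed

fun ascents_from :: "(nat \<Rightarrow> bool) \<Rightarrow> nat list \<Rightarrow> bool" where
  "ascents_from P (x # y # xs) \<longleftrightarrow> (x < y \<longrightarrow> P x) \<and> ascents_from P (y # xs)"
| "ascents_from P xs \<longleftrightarrow> True"

lemma ascents_from_Cons:
  "ascents_from P (x # xs) \<longleftrightarrow> (xs \<noteq> [] \<and> x < hd xs \<longrightarrow> P x) \<and> ascents_from P xs"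
  by (cases xs) auto

lemma ascents_from_append:
  "ascents_from P (xs @ ys) \<longleftrightarrow>
     ascents_from P xs \<and> ascents_from P ys \<and> (xs \<noteq> [] \<and> ys \<noteq> [] \<and> last xs < hd ys \<longrightarrow> P (last xs))"
  by (induction xs) (auto simp: ascents_from_Cons)

lemma ascents_from_mono: "ascents_from P xs \<Longrightarrow> (\<And>x. P x \<Longrightarrow> Q x) \<Longrightarrow> ascents_from Q xs"
  by (induction xs rule: induct_list012) auto

lemma ascents_from_map_Suc: "ascents_from P (map Suc xs) \<longleftrightarrow> ascents_from (\<lambda>x. P (Suc x)) xs"
  by (induction xs rule: induct_list012) auto

lemma ascents_from_sorted_wrt:
  "\<forall>x\<in>set xs. \<not> P x \<Longrightarrow> ascents_from P xs \<longleftrightarrow> sorted_wrt (\<ge>) xs"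
  by (induction xs rule: induct_list012) (auto simp: not_less intro: order.trans)

lemma avoids_vinc120_Cons:
  "avoids_vinc120 (x # xs) \<longleftrightarrow> (xs \<noteq> [] \<and> x < hd xs \<longrightarrow> (\<forall>z\<in>set (tl xs). x \<le> z)) \<and> avoids_vinc120 xs"
  by (cases xs) (auto simp: avoids_vinc120_Cons_Cons)

lemma avoids_vinc120_append:
  assumes "avoids_vinc120 xs" "avoids_vinc120 ys" "\<forall>y\<in>set ys. last xs < y"
  shows "avoids_vinc120 (xs @ ys)"
  using assms
proof (induction xs)
  case (Cons x xs)
  show ?case
  proof (cases "xs = []")
    case True
    then show ?thesis
      using Cons.prems by (auto simp: avoids_vinc120_Cons less_imp_le dest: list.set_sel(2))
  next
    case False
    then have "avoids_vinc120 (xs @ ys)"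
      using Cons by (simp add: avoids_vinc120_Cons)
    moreover have "x \<le> z" if "x < hd xs" "z \<in> set (tl xs @ ys)" for z
    proof -
      have tl: "\<forall>z\<in>set (tl xs). x \<le> z"
        using Cons.prems(1) that(1) False by (simp add: avoids_vinc120_Cons)
      have "x \<le> last xs"
        using tl that(1) False last_in_set[OF False] by (cases xs) auto
      then show ?thesis
        using tl that(2) Cons.prems(3) False by auto
    qed
    ultimately show ?thesis
      using False by (simp add: avoids_vinc120_Cons)
  qed
qed simp

lemma avoids_vinc120_appendD:
  assumes "avoids_vinc120 (xs @ ys)"
  shows "avoids_vinc120 xs" "avoids_vinc120 ys"
  using assms by (induction xs) (auto simp: avoids_vinc120_Cons hd_append split: if_splits)

lemma avoids_vinc120_snoc:
  "avoids_vinc120 (xs @ [x]) \<longleftrightarrow> avoids_vinc120 xs \<and> ascents_from (\<lambda>y. y \<le> x) xs"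
  by (induction xs rule: induct_list012) (auto simp: avoids_vinc120_Cons_Cons)

lemma avoids_vinc120_if_ascents_from:
  "\<forall>y\<in>set xs. t \<le> y \<Longrightarrow> ascents_from (\<lambda>x. x \<le> t) xs \<Longrightarrow> avoids_vinc120 xs"
  by (induction xs rule: induct_list012) (auto simp: avoids_vinc120_Cons_Cons intro: order.trans)

lemma avoids_vinc120_map_Suc: "avoids_vinc120 (map Suc xs) \<longleftrightarrow> avoids_vinc120 xs"
  by (induction xs rule: induct_list012) (auto simp: avoids_vinc120_Cons_Cons)

lemma snoc_in_I_vinc120:
  "h @ [x] \<in> I_vinc120 (Suc k) \<longleftrightarrow> h \<in> I_vinc120 k \<and> ascents_from (\<lambda>y. y \<le> x) h \<and> x \<le> k"
  by (auto simp: I_vinc120_def inv_seqs_iff inv_segment_append inv_segment_Cons avoids_vinc120_snoc)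

section \<open>Ascents from zero and Stirling numbers\<close>

definition zero_ascent_seqs :: "nat \<Rightarrow> nat \<Rightarrow> nat list set" where
  "zero_ascent_seqs k m = {h. length h = m \<and> inv_segment k h \<and> ascents_from (\<lambda>x. x = 0) h}"

lemma finite_zero_ascent_seqs: "finite (zero_ascent_seqs k m)"
  by (rule finite_subset[OF _ finite_inv_segments[of m k]]) (auto simp: zero_ascent_seqs_def)

lemma Cons_0_zero_ascent_seqs:
  "u @ 0 # v \<in> zero_ascent_seqs k N \<longleftrightarrow> N = length u + Suc (length v)
     \<and> u \<in> zero_ascent_seqs k (length u) \<and> v \<in> zero_ascent_seqs (Suc (k + length u)) (length v)"
  by (auto simp: zero_ascent_seqs_def inv_segment_append inv_segment_Cons ascents_from_append ascents_from_Cons)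

definition positive_decreasing :: "nat \<Rightarrow> nat \<Rightarrow> nat list set" where
  "positive_decreasing k m = {h. length h = m \<and> sorted_wrt (\<ge>) h \<and> set h \<subseteq> {1..k}}"

lemma zero_ascent_seqs_zero_free:
  "h \<in> zero_ascent_seqs k m \<and> 0 \<notin> set h \<longleftrightarrow> h \<in> positive_decreasing k m"
proof
  assume h: "h \<in> zero_ascent_seqs k m \<and> 0 \<notin> set h"
  then have "\<forall>x\<in>set h. \<not> x = 0"
    by metis
  then have sorted: "sorted_wrt (\<ge>) h"
    using h ascents_from_sorted_wrt[of h "\<lambda>x. x = 0"] by (simp add: zero_ascent_seqs_def)
  have "set h \<subseteq> {1..k}"
  proof (cases h)
    case (Cons x t)
    then have "x \<le> k"
      using h by (simp add: zero_ascent_seqs_def inv_segment_Cons)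
    show ?thesis
    proof
      fix y assume "y \<in> set h"
      then have "y \<le> x" "y \<noteq> 0"
        using sorted h Cons by (auto intro!: gr0I)
      then show "y \<in> {1..k}"
        using \<open>x \<le> k\<close> by auto
    qed
  qed simp
  then show "h \<in> positive_decreasing k m"
    using h sorted by (simp add: zero_ascent_seqs_def positive_decreasing_def)
next
  assume h: "h \<in> positive_decreasing k m"
  then have "inv_segment k h"
    by (force simp: positive_decreasing_def inv_segment_def dest: nth_mem)
  moreover have "ascents_from (\<lambda>x. x = 0) h"
    using h ascents_from_sorted_wrt[of h "\<lambda>x. x = 0"] by (force simp: positive_decreasing_def)
  ultimately show "h \<in> zero_ascent_seqs k m \<and> 0 \<notin> set h"
    using h by (force simp: positive_decreasing_def zero_ascent_seqs_def)
qed

lemma finite_positive_decreasing: "finite (positive_decreasing k m)"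
  using zero_ascent_seqs_zero_free by (blast intro: finite_subset[OF _ finite_zero_ascent_seqs])

lemma card_positive_decreasing_0: "card (positive_decreasing k 0) = 1"
proof -
  have "positive_decreasing k 0 = {[]}"
    by (auto simp: positive_decreasing_def)
  then show ?thesis
    by simp
qed

lemma card_positive_decreasing_0_Suc: "card (positive_decreasing 0 (Suc m)) = 0"
proof -
  have "positive_decreasing 0 (Suc m) = {}"
    by (auto simp: positive_decreasing_def length_Suc_conv)
  then show ?thesis
    by simp
qed

lemma card_positive_decreasing_Suc_Suc:
  "card (positive_decreasing (Suc k) (Suc m)) = card (positive_decreasing (Suc k) m) + card (positive_decreasing k (Suc m))"
proof -
  have "positive_decreasing (Suc k) (Suc m) = Cons (Suc k) ` positive_decreasing (Suc k) m \<union> positive_decreasing k (Suc m)"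
  proof (intro equalityI subsetI)
    fix h assume "h \<in> positive_decreasing (Suc k) (Suc m)"
    then obtain x t where h: "h = x # t" "length t = m" "\<forall>y\<in>set t. y \<le> x" "sorted_wrt (\<ge>) t"
      "1 \<le> x" "x \<le> Suc k" "set t \<subseteq> {1..Suc k}"
      by (auto simp: positive_decreasing_def length_Suc_conv)
    show "h \<in> Cons (Suc k) ` positive_decreasing (Suc k) m \<union> positive_decreasing k (Suc m)"
    proof (cases "x = Suc k")
      case True
      then show ?thesis
        using h by (auto simp: positive_decreasing_def)
    next
      case False
      then have "x \<le> k"
        using h by simp
      then have "set t \<subseteq> {1..k}"
        using h by (force intro: order.trans)
      then show ?thesis
        using h \<open>x \<le> k\<close> by (auto simp: positive_decreasing_def)
    qed
  qed (force simp: positive_decreasing_def)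
  moreover have "Cons (Suc k) ` positive_decreasing (Suc k) m \<inter> positive_decreasing k (Suc m) = {}"
    by (auto simp: positive_decreasing_def)
  ultimately show ?thesis
    by (simp add: card_Un_disjoint card_image finite_positive_decreasing)
qed

lemma Stirling_recurrence_if_block_recurrence:
  fixes W d :: "nat \<Rightarrow> nat \<Rightarrow> nat"
  assumes W_0: "\<And>K. W 0 K = (if K = 0 then 1 else 0)"
    and W_Suc_0: "\<And>m. W (Suc m) 0 = 0"
    and W_block: "\<And>m K. W (Suc m) (Suc K) = (\<Sum>j\<le>m. W j K * d (Suc j) (m - j))"
    and d_0: "\<And>k. d k 0 = 1" and d_0_Suc: "\<And>m. d 0 (Suc m) = 0"
    and d_Suc_Suc: "\<And>k m. d (Suc k) (Suc m) = d (Suc k) m + d k (Suc m)"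
  shows "W (Suc m) (Suc K) = W m K + Suc K * W m (Suc K)"
proof (induction m arbitrary: K rule: less_induct)
  case (less m)
  show ?case
  proof (cases m)
    case 0
    then show ?thesis
      using W_block[of 0 K] W_0 d_0 by simp
  next
    case (Suc m')
    let ?R = "\<lambda>K. \<Sum>j<m'. W (Suc j) K * d (Suc j) (m' - j)"
    have "(\<Sum>j\<le>m'. W j K * d (Suc j) (Suc (m' - j)))
        = (\<Sum>j\<le>m'. W j K * d (Suc j) (m' - j)) + (\<Sum>j\<le>m'. W j K * d j (Suc (m' - j)))"
      by (simp add: d_Suc_Suc algebra_simps sum.distrib)
    also have "(\<Sum>j\<le>m'. W j K * d j (Suc (m' - j))) = ?R K"
      by (simp add: sum.atMost_shift lessThan_Suc_atMost d_0_Suc Suc_diff_Suc)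
    finally have main: "W (Suc m) (Suc K) = W m K + W m (Suc K) + ?R K"
      using W_block[of m K] W_block[of m' K] Suc by (simp add: d_0 Suc_diff_le)
    show ?thesis
    proof (cases K)
      case 0
      then show ?thesis
        using main W_Suc_0 by simp
    next
      case (Suc K')
      have "?R K = (\<Sum>j<m'. W j K' * d (Suc j) (m' - j)) + K * (\<Sum>j<m'. W j K * d (Suc j) (m' - j))"
        using less.IH \<open>m = Suc m'\<close> Suc by (simp add: algebra_simps sum.distrib sum_distrib_left)
      moreover have "W m K = (\<Sum>j<m'. W j K' * d (Suc j) (m' - j)) + W m' K'"
        using W_block[of m' K'] Suc \<open>m = Suc m'\<close> by (simp add: lessThan_Suc_atMost[symmetric] d_0)
      moreover have "W m (Suc K) = (\<Sum>j<m'. W j K * d (Suc j) (m' - j)) + W m' K"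
        using W_block[of m' K] Suc \<open>m = Suc m'\<close> by (simp add: lessThan_Suc_atMost[symmetric] d_0)
      moreover have "W m K = W m' K' + K * W m' K"
        using less.IH[of m' K'] Suc \<open>m = Suc m'\<close> by simp
      ultimately show ?thesis
        using main by (simp add: algebra_simps)
    qed
  qed
qed

lemma card_zero_ascent_seqs_zeros_split:
  "card {h \<in> zero_ascent_seqs 0 (Suc m). count_list h 0 = Suc K}
     = (\<Sum>j\<le>m. card {h \<in> zero_ascent_seqs 0 j. count_list h 0 = K} * card (positive_decreasing (Suc j) (m - j)))"
proof -
  let ?A = "{u. u \<in> zero_ascent_seqs 0 (length u) \<and> count_list u 0 = K \<and> length u < Suc m}"
  have "card {h \<in> zero_ascent_seqs 0 (Suc m). count_list h 0 = Suc K}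
      = (\<Sum>j<Suc m. card {u \<in> ?A. length u = j} * card (positive_decreasing (Suc j) (m - j)))"
  proof (rule card_split_at_count)
    fix h
    show "h \<in> {h \<in> zero_ascent_seqs 0 (Suc m). count_list h 0 = Suc K} \<longleftrightarrow>
      (\<exists>u v. h = u @ 0 # v \<and> u \<in> ?A \<and> v \<in> positive_decreasing (Suc (length u)) (m - length u))"
    proof
      assume h: "h \<in> {h \<in> zero_ascent_seqs 0 (Suc m). count_list h 0 = Suc K}"
      then obtain u v where uv: "h = u @ 0 # v" "count_list u 0 = K"
        using split_at_count[of K h 0] by auto
      then have "0 \<notin> set v"
        using h by (simp add: count_list_0_iff[symmetric])
      then have "u \<in> ?A \<and> v \<in> positive_decreasing (Suc (length u)) (m - length u)"
        using h uv by (auto simp: Cons_0_zero_ascent_seqs zero_ascent_seqs_zero_free[symmetric])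
      then show "\<exists>u v. h = u @ 0 # v \<and> u \<in> ?A \<and> v \<in> positive_decreasing (Suc (length u)) (m - length u)"
        using uv(1) by blast
    next
      assume "\<exists>u v. h = u @ 0 # v \<and> u \<in> ?A \<and> v \<in> positive_decreasing (Suc (length u)) (m - length u)"
      then obtain u v where uv: "h = u @ 0 # v" "u \<in> ?A" "v \<in> positive_decreasing (Suc (length u)) (m - length u)"
        by blast
      then have "v \<in> zero_ascent_seqs (Suc (length u)) (length v)" "0 \<notin> set v" "length v = m - length u"
        using zero_ascent_seqs_zero_free[of v] by (auto simp: positive_decreasing_def zero_ascent_seqs_def)
      then show "h \<in> {h \<in> zero_ascent_seqs 0 (Suc m). count_list h 0 = Suc K}"
        using uv by (auto simp: Cons_0_zero_ascent_seqs)
    qed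
  next
    show "finite ?A"
      by (rule finite_subset[of _ "\<Union>j<Suc m. zero_ascent_seqs 0 j"]) (auto simp: finite_zero_ascent_seqs)
  qed (auto simp: finite_positive_decreasing)
  moreover have "{u \<in> ?A. length u = j} = {h \<in> zero_ascent_seqs 0 j. count_list h 0 = K}" if "j < Suc m" for j
    using that by (auto simp: zero_ascent_seqs_def)
  ultimately show ?thesis
    by (simp add: lessThan_Suc_atMost)
qed

lemma card_zero_ascent_seqs_zeros: "card {h \<in> zero_ascent_seqs 0 m. count_list h 0 = K} = Stirling m K"
proof -
  define W where "W m K = card {h \<in> zero_ascent_seqs 0 m. count_list h 0 = K}" for m K
  define d where "d k m = card (positive_decreasing k m)" for k m
  have W_0: "W 0 K = (if K = 0 then 1 else 0)" for K
  proof -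
    have "{h \<in> zero_ascent_seqs 0 0. count_list h 0 = K} = (if K = 0 then {[]} else {})"
      by (auto simp: zero_ascent_seqs_def)
    then show ?thesis
      by (simp add: W_def)
  qed
  have W_Suc_0: "W (Suc m) 0 = 0" for m
  proof -
    have "{h \<in> zero_ascent_seqs 0 (Suc m). count_list h 0 = 0} = {}"
      by (auto simp: zero_ascent_seqs_def length_Suc_conv inv_segment_Cons)
    then show ?thesis
      unfolding W_def by (metis card.empty)
  qed
  have W_block: "W (Suc m) (Suc K) = (\<Sum>j\<le>m. W j K * d (Suc j) (m - j))" for m K
    unfolding W_def d_def by (rule card_zero_ascent_seqs_zeros_split)
  have "W m K = Stirling m K"
  proof (induction m arbitrary: K)
    case (Suc m)
    then show ?case
      using Stirling_recurrence_if_block_recurrence[of W d, OF W_0 W_Suc_0 W_block]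
        card_positive_decreasing_0 card_positive_decreasing_0_Suc card_positive_decreasing_Suc_Suc W_Suc_0
      by (cases K) (simp_all add: d_def)
  qed (simp add: W_0)
  then show ?thesis
    by (simp add: W_def)
qed

lemma zero_ascent_seqs_0: "zero_ascent_seqs 0 k = {h \<in> I_vinc120 k. ascents_from (\<lambda>y. y \<le> 0) h}"
  by (auto simp: zero_ascent_seqs_def I_vinc120_def inv_seqs_iff
      intro: avoids_vinc120_if_ascents_from[where t = 0] elim: ascents_from_mono)

definition one_ascent_seqs :: "nat \<Rightarrow> nat list set" where
  "one_ascent_seqs k = {h \<in> I_vinc120 k. ascents_from (\<lambda>y. y \<le> 1) h}"

lemma map_Suc_zero_ascent_seqs_iff:
  "q \<in> map Suc ` zero_ascent_seqs k m \<longleftrightarrow>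
     length q = m \<and> inv_segment (Suc k) q \<and> (\<forall>y\<in>set q. 0 < y) \<and> ascents_from (\<lambda>x. x \<le> 1) q"
proof
  assume "q \<in> map Suc ` zero_ascent_seqs k m"
  then show "length q = m \<and> inv_segment (Suc k) q \<and> (\<forall>y\<in>set q. 0 < y) \<and> ascents_from (\<lambda>x. x \<le> 1) q"
    by (auto simp: zero_ascent_seqs_def inv_segment_map_Suc ascents_from_map_Suc elim: ascents_from_mono)
next
  assume q: "length q = m \<and> inv_segment (Suc k) q \<and> (\<forall>y\<in>set q. 0 < y) \<and> ascents_from (\<lambda>x. x \<le> 1) q"
  define p where "p = map (\<lambda>x. x - 1) q"
  have "q = map Suc p"
    using q by (auto simp: p_def intro: nth_equalityI)
  moreover have "p \<in> zero_ascent_seqs k m"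
    using q \<open>q = map Suc p\<close>
    by (auto simp: zero_ascent_seqs_def inv_segment_map_Suc ascents_from_map_Suc elim: ascents_from_mono)
  ultimately show "q \<in> map Suc ` zero_ascent_seqs k m"
    by blast
qed

lemma Cons_0_one_ascent_seqs:
  assumes "\<forall>y\<in>set q. 0 < y"
  shows "u @ 0 # q \<in> one_ascent_seqs N \<longleftrightarrow> N = length u + Suc (length q)
    \<and> u \<in> zero_ascent_seqs 0 (length u) \<and> q \<in> map Suc ` zero_ascent_seqs (length u) (length q)"
proof -
  have "avoids_vinc120 (u @ 0 # q) \<longleftrightarrow> avoids_vinc120 (u @ [0]) \<and> avoids_vinc120 q"
    if "ascents_from (\<lambda>x. x \<le> 1) q"
    using avoids_vinc120_appendD[of "u @ [0]" q] avoids_vinc120_append[of "u @ [0]" q] assms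
    by auto
  moreover have "avoids_vinc120 q" if "ascents_from (\<lambda>x. x \<le> 1) q"
    using that assms by (intro avoids_vinc120_if_ascents_from[where t = 1]) (auto simp: Suc_le_eq)
  ultimately show ?thesis
    using assms
    by (auto simp: one_ascent_seqs_def zero_ascent_seqs_0 map_Suc_zero_ascent_seqs_iff I_vinc120_def inv_seqs_iff
        inv_segment_append inv_segment_Cons ascents_from_append ascents_from_Cons avoids_vinc120_snoc
        elim: ascents_from_mono)
qed

lemma card_one_ascent_seqs_zeros_split:
  "card {h \<in> one_ascent_seqs (Suc k). count_list h 0 = Suc K}
     = (\<Sum>j\<le>k. Stirling j K * card (zero_ascent_seqs j (k - j)))"
proof -
  let ?A = "{u. u \<in> zero_ascent_seqs 0 (length u) \<and> count_list u 0 = K \<and> length u < Suc k}"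
  have "card {h \<in> one_ascent_seqs (Suc k). count_list h 0 = Suc K}
      = (\<Sum>j<Suc k. card {u \<in> ?A. length u = j} * card (map Suc ` zero_ascent_seqs j (k - j)))"
  proof (rule card_split_at_count)
    fix h
    show "h \<in> {h \<in> one_ascent_seqs (Suc k). count_list h 0 = Suc K} \<longleftrightarrow>
      (\<exists>u v. h = u @ 0 # v \<and> u \<in> ?A \<and> v \<in> map Suc ` zero_ascent_seqs (length u) (k - length u))"
    proof
      assume h: "h \<in> {h \<in> one_ascent_seqs (Suc k). count_list h 0 = Suc K}"
      then obtain u v where uv: "h = u @ 0 # v" "count_list u 0 = K"
        using split_at_count[of K h 0] by auto
      then have "\<forall>y\<in>set v. 0 < y"
        using h by (auto simp: count_list_0_iff intro!: gr0I)
      then have "u \<in> ?A \<and> v \<in> map Suc ` zero_ascent_seqs (length u) (k - length u)"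
        using h uv by (auto simp: Cons_0_one_ascent_seqs)
      then show "\<exists>u v. h = u @ 0 # v \<and> u \<in> ?A \<and> v \<in> map Suc ` zero_ascent_seqs (length u) (k - length u)"
        using uv(1) by blast
    next
      assume "\<exists>u v. h = u @ 0 # v \<and> u \<in> ?A \<and> v \<in> map Suc ` zero_ascent_seqs (length u) (k - length u)"
      then obtain u v where uv: "h = u @ 0 # v" "u \<in> ?A" "v \<in> map Suc ` zero_ascent_seqs (length u) (k - length u)"
        by blast
      then have "\<forall>y\<in>set v. 0 < y" "length v = k - length u"
        by (auto simp: map_Suc_zero_ascent_seqs_iff)
      then show "h \<in> {h \<in> one_ascent_seqs (Suc k). count_list h 0 = Suc K}"
        using uv by (auto simp: Cons_0_one_ascent_seqs count_list_0_iff)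
    qed
  next
    show "finite ?A"
      by (rule finite_subset[of _ "\<Union>j<Suc k. zero_ascent_seqs 0 j"]) (auto simp: finite_zero_ascent_seqs)
  qed (auto simp: finite_zero_ascent_seqs)
  moreover have "{u \<in> ?A. length u = j} = {h \<in> zero_ascent_seqs 0 j. count_list h 0 = K}" if "j < Suc k" for j
    using that by (auto simp: zero_ascent_seqs_def)
  moreover have "card (map Suc ` A) = card A" for A :: "nat list set"
    by (rule card_image) (simp add: inj_on_def)
  ultimately show ?thesis
    by (simp add: card_zero_ascent_seqs_zeros lessThan_Suc_atMost)
qed

lemma card_zero_ascent_seqs_zeros_ge_split:
  "card {h \<in> zero_ascent_seqs 0 N. Suc K \<le> count_list h 0}
     = (\<Sum>j<N. Stirling j K * card (zero_ascent_seqs (Suc j) (N - Suc j)))"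
proof -
  let ?A = "{u. u \<in> zero_ascent_seqs 0 (length u) \<and> count_list u 0 = K \<and> length u < N}"
  have "card {h \<in> zero_ascent_seqs 0 N. Suc K \<le> count_list h 0}
      = (\<Sum>j<N. card {u \<in> ?A. length u = j} * card (zero_ascent_seqs (Suc j) (N - Suc j)))"
  proof (rule card_split_at_count)
    fix h
    show "h \<in> {h \<in> zero_ascent_seqs 0 N. Suc K \<le> count_list h 0} \<longleftrightarrow>
      (\<exists>u v. h = u @ 0 # v \<and> u \<in> ?A \<and> v \<in> zero_ascent_seqs (Suc (length u)) (N - Suc (length u)))"
    proof
      assume h: "h \<in> {h \<in> zero_ascent_seqs 0 N. Suc K \<le> count_list h 0}"
      then obtain u v where uv: "h = u @ 0 # v" "count_list u 0 = K"
        using split_at_count[of K h 0] by auto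
      then have "u \<in> ?A \<and> v \<in> zero_ascent_seqs (Suc (length u)) (N - Suc (length u))"
        using h by (auto simp: Cons_0_zero_ascent_seqs)
      then show "\<exists>u v. h = u @ 0 # v \<and> u \<in> ?A \<and> v \<in> zero_ascent_seqs (Suc (length u)) (N - Suc (length u))"
        using uv(1) by blast
    next
      assume "\<exists>u v. h = u @ 0 # v \<and> u \<in> ?A \<and> v \<in> zero_ascent_seqs (Suc (length u)) (N - Suc (length u))"
      then obtain u v where uv: "h = u @ 0 # v" "u \<in> ?A" "v \<in> zero_ascent_seqs (Suc (length u)) (N - Suc (length u))"
        by blast
      then have "length v = N - Suc (length u)"
        by (simp add: zero_ascent_seqs_def)
      then show "h \<in> {h \<in> zero_ascent_seqs 0 N. Suc K \<le> count_list h 0}"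
        using uv by (auto simp: Cons_0_zero_ascent_seqs)
    qed
  next
    show "finite ?A"
      by (rule finite_subset[of _ "\<Union>j<N. zero_ascent_seqs 0 j"]) (auto simp: finite_zero_ascent_seqs)
  qed (auto simp: finite_zero_ascent_seqs)
  moreover have "{u \<in> ?A. length u = j} = {h \<in> zero_ascent_seqs 0 j. count_list h 0 = K}" if "j < N" for j
    using that by (auto simp: zero_ascent_seqs_def)
  ultimately show ?thesis
    by (simp add: card_zero_ascent_seqs_zeros)
qed

lemma Stirling_convolution_identity:
  fixes c G :: "nat \<Rightarrow> nat \<Rightarrow> nat"
  assumes G_Suc_split: "\<And>N K. G N (Suc K) = (\<Sum>j<N. Stirling j K * c (Suc j) (N - Suc j))"
    and G_step: "\<And>N K. G N K = Stirling N K + G N (Suc K)"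
    and c_0: "\<And>N. c 0 N = G N 0"
  shows "(\<Sum>j\<le>k. Stirling j K * c j (k - j)) = Stirling k K + Suc K * G k (Suc K)"
proof -
  have "(\<Sum>j\<le>k. Stirling j K * c j (k - j))
      = Stirling 0 K * c 0 k + (\<Sum>j<k. Stirling (Suc j) K * c (Suc j) (k - Suc j))"
    by (simp add: sum.atMost_shift)
  also have "\<dots> = Stirling k K + Suc K * G k (Suc K)"
  proof (cases K)
    case 0
    then show ?thesis
      using c_0 G_step[of k 0] by simp
  next
    case (Suc K')
    have "(\<Sum>j<k. Stirling (Suc j) K * c (Suc j) (k - Suc j))
        = (\<Sum>j<k. Stirling j K' * c (Suc j) (k - Suc j)) + K * (\<Sum>j<k. Stirling j K * c (Suc j) (k - Suc j))"
      by (simp add: Suc algebra_simps sum.distrib sum_distrib_left)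
    also have "\<dots> = G k K + K * G k (Suc K)"
      using G_Suc_split[of k K'] G_Suc_split[of k K] Suc by simp
    finally show ?thesis
      using Suc G_step[of k K] by (simp add: algebra_simps)
  qed
  finally show ?thesis .
qed

lemma card_one_ascent_seqs_zeros:
  "card {h \<in> one_ascent_seqs (Suc k). count_list h 0 = Suc K}
     = Stirling k K + Suc K * card {h \<in> zero_ascent_seqs 0 k. Suc K \<le> count_list h 0}"
proof -
  have "card {h \<in> zero_ascent_seqs 0 N. K \<le> count_list h 0}
      = Stirling N K + card {h \<in> zero_ascent_seqs 0 N. Suc K \<le> count_list h 0}" for N K
  proof -
    have "{h \<in> zero_ascent_seqs 0 N. K \<le> count_list h 0}
        = {h \<in> zero_ascent_seqs 0 N. count_list h 0 = K} \<union> {h \<in> zero_ascent_seqs 0 N. Suc K \<le> count_list h 0}"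
      by auto
    moreover have "card ({h \<in> zero_ascent_seqs 0 N. count_list h 0 = K} \<union> {h \<in> zero_ascent_seqs 0 N. Suc K \<le> count_list h 0})
        = card {h \<in> zero_ascent_seqs 0 N. count_list h 0 = K} + card {h \<in> zero_ascent_seqs 0 N. Suc K \<le> count_list h 0}"
      by (rule card_Un_disjoint) (use finite_zero_ascent_seqs in auto)
    ultimately show ?thesis
      by (simp add: card_zero_ascent_seqs_zeros)
  qed
  then show ?thesis
    using Stirling_convolution_identity[where c = "\<lambda>j m. card (zero_ascent_seqs j m)"
        and G = "\<lambda>N K. card {h \<in> zero_ascent_seqs 0 N. K \<le> count_list h 0}"]
    by (simp add: card_one_ascent_seqs_zeros_split card_zero_ascent_seqs_zeros_ge_split)
qed

section \<open>The recurrence for \<open>120\<close>\<close>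

lemma card_I_vinc120_last:
  "card {g \<in> I_vinc120 (Suc k). last g = x \<and> P g}
     = card {h \<in> I_vinc120 k. ascents_from (\<lambda>y. y \<le> x) h \<and> x \<le> k \<and> P (h @ [x])}"
proof -
  have "{g \<in> I_vinc120 (Suc k). last g = x \<and> P g}
      = (\<lambda>h. h @ [x]) ` {h \<in> I_vinc120 k. ascents_from (\<lambda>y. y \<le> x) h \<and> x \<le> k \<and> P (h @ [x])}"
  proof (intro equalityI subsetI)
    fix g assume g: "g \<in> {g \<in> I_vinc120 (Suc k). last g = x \<and> P g}"
    then have "g = butlast g @ [x]"
      using hd_I_vinc120[of g "Suc k"] append_butlast_last_id[of g] by simp
    then show "g \<in> (\<lambda>h. h @ [x]) ` {h \<in> I_vinc120 k. ascents_from (\<lambda>y. y \<le> x) h \<and> x \<le> k \<and> P (h @ [x])}"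
      using g snoc_in_I_vinc120[of "butlast g" x k] by (intro image_eqI[of _ _ "butlast g"]) auto
  qed (auto simp: snoc_in_I_vinc120)
  then show ?thesis
    by simp
qed

lemma card_I_vinc120_last_0:
  "card {g \<in> I_vinc120 (Suc k). last g = 0 \<and> P (count_list g 0)}
     = card {h \<in> zero_ascent_seqs 0 k. P (Suc (count_list h 0))}"
  unfolding card_I_vinc120_last zero_ascent_seqs_0 by simp

lemma card_I_vinc120_last_1:
  "1 \<le> k \<Longrightarrow> card {g \<in> I_vinc120 (Suc k). last g = 1 \<and> P (count_list g 0)}
     = card {h \<in> one_ascent_seqs k. P (count_list h 0)}"
  unfolding card_I_vinc120_last one_ascent_seqs_def by simp

lemma card_I_vinc120_last_0_recurrence:
  assumes "1 \<le> k"
  shows "card {g \<in> I_vinc120 (Suc k). last g = 0 \<and> count_list g 0 = z}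
    = card {c \<in> I_vinc120 k. last c = 0 \<and> Suc (count_list c 0) = z}
      + (z - 1) * card {c \<in> I_vinc120 k. last c = 0 \<and> count_list c 0 = z}"
proof -
  obtain k' where k: "k = Suc k'"
    using assms by (cases k) auto
  have "card {g \<in> I_vinc120 (Suc k). last g = 0 \<and> count_list g 0 = z}
      = card {h \<in> zero_ascent_seqs 0 (Suc k'). Suc (count_list h 0) = z}"
    using card_I_vinc120_last_0[of k "\<lambda>x. x = z"] k by simp
  moreover have "card {c \<in> I_vinc120 k. last c = 0 \<and> Suc (count_list c 0) = z}
      = card {h \<in> zero_ascent_seqs 0 k'. Suc (Suc (count_list h 0)) = z}"
    using card_I_vinc120_last_0[of k' "\<lambda>x. Suc x = z"] k by simp
  moreover have "card {c \<in> I_vinc120 k. last c = 0 \<and> count_list c 0 = z}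
      = card {h \<in> zero_ascent_seqs 0 k'. Suc (count_list h 0) = z}"
    using card_I_vinc120_last_0[of k' "\<lambda>x. x = z"] k by simp
  ultimately show ?thesis
    by (cases z; cases "z - 1") (simp_all add: card_zero_ascent_seqs_zeros)
qed

lemma card_I_vinc120_last_1_recurrence:
  assumes "1 \<le> k"
  shows "card {g \<in> I_vinc120 (Suc k). last g = 1 \<and> count_list g 0 = z}
    = card {c \<in> I_vinc120 k. last c = 0 \<and> count_list c 0 = z}
      + z * card {c \<in> I_vinc120 k. last c = 0 \<and> z < count_list c 0}"
proof -
  obtain k' where k: "k = Suc k'"
    using assms by (cases k) auto
  have "card {g \<in> I_vinc120 (Suc k). last g = 1 \<and> count_list g 0 = z}
      = card {h \<in> one_ascent_seqs (Suc k'). count_list h 0 = z}"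
    using card_I_vinc120_last_1[OF assms, of "\<lambda>x. x = z"] k by simp
  moreover have "card {c \<in> I_vinc120 k. last c = 0 \<and> count_list c 0 = z}
      = card {h \<in> zero_ascent_seqs 0 k'. Suc (count_list h 0) = z}"
    using card_I_vinc120_last_0[of k' "\<lambda>x. x = z"] k by simp
  moreover have "card {c \<in> I_vinc120 k. last c = 0 \<and> z < count_list c 0}
      = card {h \<in> zero_ascent_seqs 0 k'. z < Suc (count_list h 0)}"
    using card_I_vinc120_last_0[of k' "\<lambda>x. z < x"] k by simp
  moreover have "{h \<in> one_ascent_seqs (Suc k'). count_list h 0 = 0} = {}"
    by (auto simp: one_ascent_seqs_def I_vinc120_def inv_seqs_iff length_Suc_conv inv_segment_Cons)
  ultimately show ?thesis
    by (cases z) (simp_all add: card_one_ascent_seqs_zeros card_zero_ascent_seqs_zeros Suc_le_eq)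
qed

definition tails_above :: "nat \<Rightarrow> nat \<Rightarrow> nat \<Rightarrow> nat list set" where
  "tails_above t k m = {q. length q = m \<and> inv_segment k q \<and> (\<forall>y\<in>set q. t < y) \<and> avoids_vinc120 q}"

lemma finite_tails_above: "finite (tails_above t k m)"
  by (rule finite_subset[OF _ finite_inv_segments[of m k]]) (auto simp: tails_above_def)

lemma inj_on_split_last_le:
  "inj_on (\<lambda>(k, g, q). g @ q) (SIGMA k:{1..m}. {g \<in> I_vinc120 k. last g \<le> t} \<times> tails_above t k (m - k))"
proof (rule inj_onI)
  fix a b
  assume A: "a \<in> (SIGMA k:{1..m}. {g \<in> I_vinc120 k. last g \<le> t} \<times> tails_above t k (m - k))"
    and B: "b \<in> (SIGMA k:{1..m}. {g \<in> I_vinc120 k. last g \<le> t} \<times> tails_above t k (m - k))"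
    and eq: "(\<lambda>(k, g, q). g @ q) a = (\<lambda>(k, g, q). g @ q) b"
  obtain k g q k' g' q' where a: "a = (k, g, q)" and b: "b = (k', g', q')"
    by (cases a; cases b) blast
  have g: "g \<in> I_vinc120 k" "1 \<le> k" "last g \<le> t" "q \<in> tails_above t k (m - k)"
    and g': "g' \<in> I_vinc120 k'" "1 \<le> k'" "last g' \<le> t" "q' \<in> tails_above t k' (m - k')"
    using A B unfolding a b by auto
  have "g = g' \<and> q = q'"
  proof (rule append_eq_append_split_last[where P = "\<lambda>x. x \<le> t"])
    show "g @ q = g' @ q'"
      using eq unfolding a b by simp
    show "g \<noteq> []" "g' \<noteq> []"
      using hd_I_vinc120 g(1,2) g'(1,2) by blast+
    show "\<forall>y\<in>set q. \<not> y \<le> t" "\<forall>y\<in>set q'. \<not> y \<le> t"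
      using g(4) g'(4) by (auto simp: tails_above_def)
  qed (use g g' in auto)
  moreover have "k = length g" "k' = length g'"
    using g(1) g'(1) by (auto simp: I_vinc120_def inv_seqs_iff)
  ultimately show "a = b"
    unfolding a b by simp
qed

lemma image_split_last_le:
  assumes "1 \<le> m"
  shows "(\<lambda>(k, g, q). g @ q) ` (SIGMA k:{1..m}. {g \<in> I_vinc120 k. last g \<le> t} \<times> tails_above t k (m - k))
    = I_vinc120 m"
proof (intro equalityI subsetI)
  fix f assume "f \<in> (\<lambda>(k, g, q). g @ q) ` (SIGMA k:{1..m}. {g \<in> I_vinc120 k. last g \<le> t} \<times> tails_above t k (m - k))"
  then obtain k g q where f: "f = g @ q" and g: "g \<in> I_vinc120 k" "1 \<le> k" "k \<le> m" "last g \<le> t"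
    and q: "q \<in> tails_above t k (m - k)"
    by auto
  have "\<forall>y\<in>set q. last g < y"
    using g(4) q by (auto simp: tails_above_def)
  then have "avoids_vinc120 (g @ q)"
    using g(1) q by (intro avoids_vinc120_append) (auto simp: I_vinc120_def tails_above_def)
  moreover have "length (g @ q) = m" "inv_segment 0 (g @ q)"
    using g q by (auto simp: I_vinc120_def inv_seqs_iff tails_above_def inv_segment_append)
  ultimately show "f \<in> I_vinc120 m"
    using f by (simp add: I_vinc120_def inv_seqs_iff)
next
  fix f assume f: "f \<in> I_vinc120 m"
  have "f \<noteq> []" "hd f = 0"
    using hd_I_vinc120[OF f assms] by auto
  then have "\<exists>x\<in>set f. x \<le> t"
    using hd_in_set[of f] by force
  then obtain ys x zs where split: "f = ys @ x # zs" "x \<le> t" "\<forall>z\<in>set zs. \<not> z \<le> t"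
    by (rule split_list_last_propE)
  let ?g = "ys @ [x]"
  have f': "f = ?g @ zs"
    using split by simp
  have "avoids_vinc120 ?g" "avoids_vinc120 zs"
    using f avoids_vinc120_appendD[of ?g zs] unfolding f' by (auto simp: I_vinc120_def)
  moreover have "inv_segment 0 ?g" "inv_segment (length ?g) zs" "length ?g + length zs = m"
    using f unfolding f' by (auto simp: I_vinc120_def inv_seqs_iff inv_segment_append simp del: append_assoc)
  ultimately have "?g \<in> I_vinc120 (length ?g)" "zs \<in> tails_above t (length ?g) (m - length ?g)"
    "length ?g \<in> {1..m}"
    using split(3) by (auto simp: I_vinc120_def inv_seqs_iff tails_above_def not_le)
  then show "f \<in> (\<lambda>(k, g, q). g @ q) ` (SIGMA k:{1..m}. {g \<in> I_vinc120 k. last g \<le> t} \<times> tails_above t k (m - k))"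
    using split(2) f' by (intro image_eqI[of _ _ "(length ?g, ?g, zs)"]) auto
qed

lemma card_I_vinc120_by_tail:
  assumes "1 \<le> m"
  shows "card {f \<in> I_vinc120 m. P f}
    = (\<Sum>k\<in>{1..m}. \<Sum>q\<in>tails_above t k (m - k). card {g \<in> I_vinc120 k. last g \<le> t \<and> P (g @ q)})"
proof -
  have "card {f \<in> I_vinc120 m. P f}
      = (\<Sum>k\<in>{1..m}. card {b \<in> {g \<in> I_vinc120 k. last g \<le> t} \<times> tails_above t k (m - k).
           P ((\<lambda>(k, g, q). g @ q) (k, b))})"
    using bij_betw_Sigma_card_filter[OF bij_betw_imageI[OF inj_on_split_last_le image_split_last_le[OF assms]]]
    by (simp add: finite_I_vinc120 finite_tails_above)
  also have "\<dots> = (\<Sum>k\<in>{1..m}. \<Sum>q\<in>tails_above t k (m - k). card {g \<in> I_vinc120 k. last g \<le> t \<and> P (g @ q)})"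
  proof (rule sum.cong[OF refl])
    fix k
    have "card {b \<in> {g \<in> I_vinc120 k. last g \<le> t} \<times> tails_above t k (m - k). P ((\<lambda>(k, g, q). g @ q) (k, b))}
        = card {(g, q) \<in> {g \<in> I_vinc120 k. last g \<le> t} \<times> tails_above t k (m - k). P (g @ q)}"
      by (rule arg_cong[where f = card]) auto
    also have "\<dots> = (\<Sum>q\<in>tails_above t k (m - k). card {g \<in> {g \<in> I_vinc120 k. last g \<le> t}. P (g @ q)})"
      by (rule card_product_filter) (simp_all add: finite_I_vinc120 finite_tails_above)
    finally show "card {b \<in> {g \<in> I_vinc120 k. last g \<le> t} \<times> tails_above t k (m - k). P ((\<lambda>(k, g, q). g @ q) (k, b))}
        = (\<Sum>q\<in>tails_above t k (m - k). card {g \<in> I_vinc120 k. last g \<le> t \<and> P (g @ q)})"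
      by (simp add: conj_assoc)
  qed
  finally show ?thesis .
qed

lemma tails_above_Suc_Suc: "tails_above (Suc t) (Suc k) m = map Suc ` tails_above t k m"
proof (intro equalityI subsetI)
  fix q assume q: "q \<in> tails_above (Suc t) (Suc k) m"
  define p where "p = map (\<lambda>x. x - 1) q"
  have "q = map Suc p"
    using q unfolding p_def map_map by (intro map_idI[symmetric]) (auto simp: tails_above_def)
  then have "p \<in> tails_above t k m"
    using q by (auto simp: tails_above_def inv_segment_map_Suc avoids_vinc120_map_Suc)
  then show "q \<in> map Suc ` tails_above t k m"
    using \<open>q = map Suc p\<close> by blast
qed (auto simp: tails_above_def inv_segment_map_Suc avoids_vinc120_map_Suc)

lemma card_I_vinc120_Suc_by_tail:
  assumes "1 \<le> n"
  shows "card {f \<in> I_vinc120 (Suc n). P f}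
    = (\<Sum>k\<in>{1..n}. \<Sum>q\<in>tails_above 0 k (n - k). card {g \<in> I_vinc120 (Suc k). last g \<le> 1 \<and> P (g @ map Suc q)})"
proof -
  let ?F = "\<lambda>k. \<Sum>q\<in>tails_above 1 k (Suc n - k). card {g \<in> I_vinc120 k. last g \<le> 1 \<and> P (g @ q)}"
  have "tails_above 1 1 n = {}"
  proof -
    have False if "q \<in> tails_above 1 1 n" for q
    proof -
      have "q \<noteq> []" "inv_segment 1 q" "\<forall>y\<in>set q. 1 < y"
        using that assms by (auto simp: tails_above_def)
      then show False
        by (cases q) (auto simp: inv_segment_Cons)
    qed
    then show ?thesis
      by blast
  qed
  have "card {f \<in> I_vinc120 (Suc n). P f} = (\<Sum>k\<in>{1..Suc n}. ?F k)"
    by (rule card_I_vinc120_by_tail) simp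
  also have "\<dots> = ?F 1 + (\<Sum>k\<in>{Suc 1..Suc n}. ?F k)"
    by (rule sum.atLeast_Suc_atMost) simp
  also have "(\<Sum>k\<in>{Suc 1..Suc n}. ?F k) = (\<Sum>k\<in>{1..n}. ?F (Suc k))"
    by (rule sum.shift_bounds_cl_Suc_ivl)
  also have "?F 1 = 0"
    using \<open>tails_above 1 1 n = {}\<close> by simp
  also have "(\<Sum>k\<in>{1..n}. ?F (Suc k))
      = (\<Sum>k\<in>{1..n}. \<Sum>q\<in>tails_above 0 k (n - k). card {g \<in> I_vinc120 (Suc k). last g \<le> 1 \<and> P (g @ map Suc q)})"
  proof (rule sum.cong[OF refl])
    fix k
    have "tails_above 1 (Suc k) (Suc n - Suc k) = map Suc ` tails_above 0 k (n - k)"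
      using tails_above_Suc_Suc[of 0 k] by simp
    moreover have "inj_on (map Suc) (tails_above 0 k (n - k))"
      by (simp add: inj_on_def)
    ultimately show "?F (Suc k) = (\<Sum>q\<in>tails_above 0 k (n - k). card {g \<in> I_vinc120 (Suc k). last g \<le> 1 \<and> P (g @ map Suc q)})"
      by (simp add: sum.reindex)
  qed
  finally show ?thesis
    by simp
qed

definition last_or_0 :: "nat list \<Rightarrow> nat" where
  "last_or_0 q = (if q = [] then 0 else last q)"

lemma stats_append_positive:
  assumes "c \<noteq> []" "last c = 0" "\<forall>y\<in>set q. 0 < y"
  shows "stats (c @ q) = (last_or_0 q, count_list c 0, Suc (rmin_stat q))"
proof -
  have "rmin_stat c = 1"
    using rmin_stat_last_le_1[of c] assms(1,2) last_in_set[OF assms(1)] by simp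
  then have "rmin_stat (c @ q) = Suc (rmin_stat q)"
    using rmin_stat_append[OF assms(1)] assms(2,3) by simp
  moreover have "count_list q 0 = 0"
    using assms(3) by (auto simp: count_list_0_iff)
  ultimately show ?thesis
    using assms(2) by (simp add: stats_def last_or_0_def)
qed

lemma stats_append_map_Suc:
  assumes "0 \<in> set g" "last g \<le> 1" "\<forall>y\<in>set q. 0 < y"
  shows "stats (g @ map Suc q) =
    (if last g = 0 then succ_nonzero (last_or_0 q) else Suc (last_or_0 q), count_list g 0, Suc (last g) + rmin_stat q)"
proof -
  have "g \<noteq> []"
    using assms(1) by auto
  have "\<forall>y\<in>set (map Suc q). last g < y"
    using assms(2,3) by auto
  then have "rmin_stat (g @ map Suc q) = Suc (last g) + rmin_stat q"
    using rmin_stat_append[OF \<open>g \<noteq> []\<close>] rmin_stat_last_le_1[OF assms(1,2)] by (simp add: rmin_stat_map_Suc)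
  moreover have "count_list (map Suc q) 0 = 0"
    by (simp add: count_list_0_iff)
  moreover have "last (g @ map Suc q) = (if last g = 0 then succ_nonzero (last_or_0 q) else Suc (last_or_0 q))"
  proof -
    have "q \<noteq> [] \<Longrightarrow> 0 < last q"
      using assms(3) last_in_set by blast
    then show ?thesis
      using assms(2) by (auto simp: last_or_0_def succ_nonzero_def last_map)
  qed
  ultimately show ?thesis
    by (simp add: stats_def)
qed

lemma card_I_vinc120_head_stats:
  assumes "\<forall>y\<in>set q. 0 < y"
  shows "card {g \<in> I_vinc120 (Suc k). last g \<le> 1 \<and> stats (g @ map Suc q) = (l, z, r)}
    = (if succ_nonzero (last_or_0 q) = l \<and> Suc (rmin_stat q) = r
       then card {g \<in> I_vinc120 (Suc k). last g = 0 \<and> count_list g 0 = z} else 0)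
    + (if Suc (last_or_0 q) = l \<and> Suc (Suc (rmin_stat q)) = r
       then card {g \<in> I_vinc120 (Suc k). last g = 1 \<and> count_list g 0 = z} else 0)"
proof -
  have "{g \<in> I_vinc120 (Suc k). last g \<le> 1 \<and> stats (g @ map Suc q) = (l, z, r)}
      = (if succ_nonzero (last_or_0 q) = l \<and> Suc (rmin_stat q) = r
         then {g \<in> I_vinc120 (Suc k). last g = 0 \<and> count_list g 0 = z} else {})
      \<union> (if Suc (last_or_0 q) = l \<and> Suc (Suc (rmin_stat q)) = r
         then {g \<in> I_vinc120 (Suc k). last g = 1 \<and> count_list g 0 = z} else {})"
    (is "?L = ?R")
  proof (rule set_eqI)
    fix g
    show "g \<in> ?L \<longleftrightarrow> g \<in> ?R"
    proof (cases "g \<in> I_vinc120 (Suc k) \<and> last g \<le> 1")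
      case True
      then have "0 \<in> set g"
        using hd_I_vinc120[of g "Suc k"] hd_in_set[of g] by auto
      then have "stats (g @ map Suc q) = (if last g = 0 then succ_nonzero (last_or_0 q) else Suc (last_or_0 q),
          count_list g 0, Suc (last g) + rmin_stat q)"
        using stats_append_map_Suc True assms by blast
      moreover have "last g = 0 \<or> last g = 1"
        using True by auto
      ultimately show ?thesis
        using True by auto
    qed auto
  qed
  then show ?thesis
    by (simp add: card_Un_disjoint finite_I_vinc120)
qed

lemma card_heads_by_tail:
  assumes "1 \<le> k" "\<forall>y\<in>set q. 0 < y"
  shows "card {g \<in> I_vinc120 (Suc k). last g \<le> 1 \<and> stats (g @ map Suc q) = (l, z, r)}
    = stat_recurrence_rhs (\<lambda>P. card {c \<in> I_vinc120 k. last c = 0 \<and> P (stats (c @ q))}) l z r"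
proof -
  define C where "C X = card {c \<in> I_vinc120 k. last c = 0 \<and> X (count_list c 0)}" for X
  have "card {c \<in> I_vinc120 k. last c = 0 \<and> P (stats (c @ q))}
      = card {c \<in> I_vinc120 k. last c = 0 \<and> P (last_or_0 q, count_list c 0, Suc (rmin_stat q))}" for P
    using stats_append_positive[OF _ _ assms(2)] hd_I_vinc120[OF _ assms(1)]
    by (intro arg_cong[where f = card] Collect_cong) auto
  then have "stat_recurrence_rhs (\<lambda>P. card {c \<in> I_vinc120 k. last c = 0 \<and> P (stats (c @ q))}) l z r
      = (if succ_nonzero (last_or_0 q) = l \<and> Suc (rmin_stat q) = r
         then C (\<lambda>x. Suc x = z) + (z - 1) * C (\<lambda>x. x = z) else 0)
      + (if Suc (last_or_0 q) = l \<and> Suc (Suc (rmin_stat q)) = r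
         then C (\<lambda>x. x = z) + z * C (\<lambda>x. z < x) else 0)"
    by (simp add: stat_recurrence_rhs_def C_def)
  then show ?thesis
    unfolding card_I_vinc120_head_stats[OF assms(2)] C_def
    using card_I_vinc120_last_0_recurrence[OF assms(1)] card_I_vinc120_last_1_recurrence[OF assms(1)]
    by simp
qed

theorem I_vinc120_stat_recurrence:
  assumes "1 \<le> n"
  shows "card {f \<in> I_vinc120 (Suc n). stats f = (l, z, r)}
    = stat_recurrence_rhs (\<lambda>P. card {e \<in> I_vinc120 n. P (stats e)}) l z r"
proof -
  have "card {f \<in> I_vinc120 (Suc n). stats f = (l, z, r)}
      = (\<Sum>k\<in>{1..n}. \<Sum>q\<in>tails_above 0 k (n - k).
           card {g \<in> I_vinc120 (Suc k). last g \<le> 1 \<and> stats (g @ map Suc q) = (l, z, r)})"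
    by (rule card_I_vinc120_Suc_by_tail[OF assms])
  also have "\<dots> = (\<Sum>k\<in>{1..n}. \<Sum>q\<in>tails_above 0 k (n - k).
      stat_recurrence_rhs (\<lambda>P. card {c \<in> I_vinc120 k. last c = 0 \<and> P (stats (c @ q))}) l z r)"
    by (intro sum.cong refl card_heads_by_tail) (auto simp: tails_above_def)
  also have "\<dots> = stat_recurrence_rhs (\<lambda>P. \<Sum>k\<in>{1..n}. \<Sum>q\<in>tails_above 0 k (n - k).
      card {c \<in> I_vinc120 k. last c = 0 \<and> P (stats (c @ q))}) l z r"
    by (simp add: stat_recurrence_rhs_sum)
  also have "\<dots> = stat_recurrence_rhs (\<lambda>P. card {e \<in> I_vinc120 n. P (stats e)}) l z r"
    using card_I_vinc120_by_tail[OF assms, where t = 0] by simp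
  finally show ?thesis .
qed

theorem proposition3p1:
  fixes n a b c :: nat
  assumes "n \<ge> 1"
  shows "card {e \<in> I_vinc120 n. last_stat e = a \<and> zero_stat e = b \<and> rmin_stat e = c}
       = card {e \<in> I_110 n. last_stat e = a \<and> zero_stat e = b \<and> rmin_stat e = c}"
proof -
  have "card {e \<in> I_vinc120 n. stats e = (a, b, c)} = card {e \<in> I_110 n. stats e = (a, b, c)}"
  proof (rule equidistributed_if_same_recurrence)
    show "card {f \<in> I_vinc120 (Suc m). stats f = s}
        = (\<lambda>s N. case s of (l, z, r) \<Rightarrow> stat_recurrence_rhs N l z r) s (\<lambda>P. card {e \<in> I_vinc120 m. P (stats e)})"
      if "1 \<le> m" for m s
      using I_vinc120_stat_recurrence[OF that] by (cases s) auto
    show "card {f \<in> I_110 (Suc m). stats f = s}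
        = (\<lambda>s N. case s of (l, z, r) \<Rightarrow> stat_recurrence_rhs N l z r) s (\<lambda>P. card {e \<in> I_110 m. P (stats e)})"
      if "1 \<le> m" for m s
      using I_110_stat_recurrence[OF that] by (cases s) auto
  qed (use assms finite_I_vinc120 finite_I_110 I_vinc120_1 I_110_1 in auto)
  then show ?thesis
    by (simp add: stats_def last_stat_def zero_stat_eq_count_list)
qed

end
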